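(* Let $\nu\in\mathcal{P}_2(\mathbb{R}^2)$, let $\mu$ be the $x$-marginal of an optimal plan $\gamma$ (a minimizer of $\int c\,d\gamma$ over $\Gamma(\nu)$), and let $\mu_i$ be the $x_i$-marginal of $\mu$, $i=1,2$. Then $\mu$ maximizes $\int x_1x_2\,d\pi$ over $\pi\in\Pi(\mu_1,\mu_2)$; equivalently, $$W_2(\mu_1,\mu_2)=\sqrt{\int|x_1-x_2|^2\,d\mu}.$$
   Context: $c(x,y)=(x_1-y_1)(x_2-y_2)$ for $x,y\in\mathbb{R}^2$. $\mathcal{P}_2(\mathbb{R}^d)$: Borel probability measures with finite second moment. $\Gamma(\nu)$: the set of $\gamma\in\mathcal{P}_2(\mathbb{R}^2\times\mathbb{R}^2)$ (points $(x,y)$) with $y$-marginal $\nu$ and $\gamma(y|x)=x$ (conditional expectation of $y$ given $x$ equals $x$, $\gamma$-a.s.). $\Pi(\mu_1,\mu_2)$ is the set of couplings of $\mu_1,\mu_2$, and $W_2(\mu_1,\mu_2)=\inf_{\pi\in\Pi(\mu_1,\mu_2)}\big(\int|s-t|^2d\pi(s,t)\big)^{1/2}$. *)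

theory Defs
  imports "HOL-Probability.Probability"
begin

type_synonym r2 = "real \<times> real"

definition P2 :: "('a::euclidean_space) measure set" where
  "P2 = {m. prob_space m \<and> sets m = sets borel \<and> integrable m (\<lambda>z. (norm z)^2)}"

definition cost :: "r2 \<Rightarrow> r2 \<Rightarrow> real" where
  "cost x y = (fst x - fst y) * (snd x - snd y)"

text \<open>gamma(y|x) = x gamma-a.s., written out via the defining property of
 conditional expectation: E[(y - x) 1_A(x)] = 0 for every Borel set A (componentwise).\<close>
definition cond_exp_identity :: "(r2 \<times> r2) measure \<Rightarrow> bool" where
  "cond_exp_identity g \<longleftrightarrow> (\<forall>A \<in> sets (borel :: r2 measure).
     (\<integral>p. indicator A (fst p) * (fst (snd p) - fst (fst p)) \<partial>g) = 0 \<and>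
     (\<integral>p. indicator A (fst p) * (snd (snd p) - snd (fst p)) \<partial>g) = 0)"

definition Gamma :: "r2 measure \<Rightarrow> (r2 \<times> r2) measure set" where
  "Gamma \<nu> = {g. g \<in> P2 \<and> distr g borel snd = \<nu> \<and> cond_exp_identity g}"

definition couplings :: "real measure \<Rightarrow> real measure \<Rightarrow> r2 measure set" where
  "couplings m1 m2 = {p. prob_space p \<and> sets p = sets borel \<and>
      distr p borel fst = m1 \<and> distr p borel snd = m2}"

definition W2 :: "real measure \<Rightarrow> real measure \<Rightarrow> real" where
  "W2 m1 m2 = sqrt (INF p \<in> couplings m1 m2. \<integral>st. (fst st - snd st)^2 \<partial>p)"

end

theory Submission
  imports Defs
begin

text \<open>
  By the martingale constraint, \<open>\<integral> c d\<gamma> = \<integral> y\<^sub>1 y\<^sub>2 d\<nu> - \<integral> x\<^sub>1 x\<^sub>2 d\<mu>\<close> for every plan in \<open>\<Gamma>(\<nu>)\<close>,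
  so an optimal plan maximises \<open>\<integral> x\<^sub>1 x\<^sub>2 d\<mu>\<close>. Collapsing the first coordinate on a Borel set
  \<open>E\<close> onto its \<open>\<mu>\<close>-barycentre keeps the plan in \<open>\<Gamma>(\<nu>)\<close> and lowers \<open>\<integral> x\<^sub>1 x\<^sub>2 d\<mu>\<close> by
  \<open>\<mu>(E) Cov\<^sub>\<mu>(x\<^sub>1, x\<^sub>2 | E)\<close>, so \<open>\<mu>\<close> has nonnegative covariance on every Borel set.
  If \<open>\<mu>\<close> charged both \<open>{x\<^sub>1 > s, x\<^sub>2 \<le> t}\<close> and \<open>{x\<^sub>1 \<le> s, x\<^sub>2 > t}\<close>, a pigeonhole
  argument would produce two small squares, one in each of these quadrants, whose union has
  negative covariance; hence \<open>\<mu>\<close> is comonotone. For a comonotone \<open>\<mu>\<close> the probabilities of the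
  quadrants \<open>{x\<^sub>1 > s, x\<^sub>2 > t}\<close> and \<open>{x\<^sub>1 \<le> s, x\<^sub>2 \<le> t}\<close> are maximal, and those of the
  mixed quadrants minimal, among all couplings of its marginals; writing the positive and negative
  parts of \<open>x\<^sub>1 x\<^sub>2\<close> as layer-cake integrals over quadrants gives
  \<open>\<integral> x\<^sub>1 x\<^sub>2 d\<pi> \<le> \<integral> x\<^sub>1 x\<^sub>2 d\<mu>\<close>. Expanding \<open>|x\<^sub>1 - x\<^sub>2|\<^sup>2\<close> yields the value of \<open>W\<^sub>2\<close>.
\<close>

lemma measurable_fst_borel [measurable]:
  "fst \<in> measurable (borel :: ('a::second_countable_topology \<times> 'b::second_countable_topology) measure) borel"
  by (metis borel_prod measurable_fst)

lemma measurable_snd_borel [measurable]: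
  "snd \<in> measurable (borel :: ('a::second_countable_topology \<times> 'b::second_countable_topology) measure) borel"
  by (metis borel_prod measurable_snd)

lemma abs_components_le_norm:
  fixes p :: "r2 \<times> r2"
  shows "\<bar>fst (fst p)\<bar> \<le> norm p" "\<bar>snd (fst p)\<bar> \<le> norm p"
    "\<bar>fst (snd p)\<bar> \<le> norm p" "\<bar>snd (snd p)\<bar> \<le> norm p"
proof -
  have "\<bar>fst z\<bar> \<le> norm z" "\<bar>snd z\<bar> \<le> norm z" for z :: r2
    using norm_fst_le[of "fst z" "snd z"] norm_snd_le[of "snd z" "fst z"] by auto
  moreover have "norm (fst p) \<le> norm p" "norm (snd p) \<le> norm p"
    using norm_fst_le[of "fst p" "snd p"] norm_snd_le[of "snd p" "fst p"] by auto
  ultimately show "\<bar>fst (fst p)\<bar> \<le> norm p" "\<bar>snd (fst p)\<bar> \<le> norm p"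
    "\<bar>fst (snd p)\<bar> \<le> norm p" "\<bar>snd (snd p)\<bar> \<le> norm p"
    by (meson order_trans)+
qed

lemma integrable_bounded_by_norm_sq:
  fixes M :: "'a::real_normed_vector measure"
  assumes "finite_measure M" and "integrable M (\<lambda>z. norm z ^ 2)" and "h \<in> borel_measurable M"
    and "\<And>z. \<bar>h z\<bar> \<le> C * norm z ^ 2 + C"
  shows "integrable M h"
proof (rule Bochner_Integration.integrable_bound)
  show "integrable M (\<lambda>z. C * norm z ^ 2 + C)"
    using assms(1,2) by (intro Bochner_Integration.integrable_add integrable_mult_right
        finite_measure.integrable_const)
  show "AE z in M. norm (h z) \<le> norm (C * norm z ^ 2 + C)"
    using assms(4) by (intro AE_I2) (auto intro: order_trans[OF _ abs_ge_self])
qed fact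

lemma integrable_mult_linear_growth:
  fixes M :: "'a::real_normed_vector measure"
  assumes "finite_measure M" and "integrable M (\<lambda>z. norm z ^ 2)"
    and "u \<in> borel_measurable M" and "v \<in> borel_measurable M"
    and u: "\<And>z. \<bar>u z\<bar> \<le> k * norm z + c" and v: "\<And>z. \<bar>v z\<bar> \<le> k * norm z + c"
    and "0 \<le> k" and "0 \<le> c"
  shows "integrable M (\<lambda>z. u z * v z)"
proof (rule integrable_bounded_by_norm_sq[where C = "2 * k\<^sup>2 + 2 * c\<^sup>2"])
  fix z :: 'a
  have "0 \<le> k * norm z + c"
    using assms(7,8) by simp
  then have "\<bar>u z * v z\<bar> \<le> (k * norm z + c) * (k * norm z + c)"
    unfolding abs_mult using u v by (intro mult_mono) auto
  also have "\<dots> \<le> 2 * k\<^sup>2 * norm z ^ 2 + 2 * c\<^sup>2"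
    using zero_le_power2[of "k * norm z - c"] by (simp add: power2_eq_square algebra_simps)
  also have "\<dots> \<le> (2 * k\<^sup>2 + 2 * c\<^sup>2) * norm z ^ 2 + (2 * k\<^sup>2 + 2 * c\<^sup>2)"
    by (simp add: algebra_simps add_increasing)
  finally show "\<bar>u z * v z\<bar> \<le> (2 * k\<^sup>2 + 2 * c\<^sup>2) * norm z ^ 2 + (2 * k\<^sup>2 + 2 * c\<^sup>2)" .
qed (use assms in auto)

lemma integrable_linear_growth:
  fixes M :: "'a::real_normed_vector measure"
  assumes "finite_measure M" and "integrable M (\<lambda>z. norm z ^ 2)" and "u \<in> borel_measurable M"
    and "\<And>z. \<bar>u z\<bar> \<le> k * norm z + c" and "0 \<le> k" and "0 \<le> c"
  shows "integrable M u"
proof -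
  have "integrable M (\<lambda>z. u z * 1)"
  proof (rule integrable_mult_linear_growth[OF assms(1-3), where k = k and c = "c + 1"])
    show "\<bar>u z\<bar> \<le> k * norm z + (c + 1)" for z
      using assms(4)[of z] by linarith
    show "\<bar>1\<bar> \<le> k * norm z + (c + 1)" for z
      using assms(5,6) by simp
  qed (use assms in auto)
  then show ?thesis by simp
qed

lemma P2_distr_norm_le:
  fixes g :: "('a::euclidean_space) measure" and f :: "'a \<Rightarrow> 'b::euclidean_space"
  assumes "g \<in> P2" and "f \<in> borel_measurable borel" and "\<And>z. norm (f z) \<le> norm z"
  shows "distr g borel f \<in> P2"
proof -
  have g: "prob_space g" "sets g = sets borel" "integrable g (\<lambda>z. norm z ^ 2)"
    using assms(1) by (auto simp: P2_def)
  have f: "f \<in> measurable g borel"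
    using assms(2) by (simp add: measurable_cong_sets[OF g(2) refl])
  have "integrable g (\<lambda>z. norm (f z) ^ 2)"
    using g(3) f assms(3) by (intro Bochner_Integration.integrable_bound[OF g(3)] AE_I2)
      (auto intro: power_mono)
  then show ?thesis
    using prob_space.prob_space_distr[OF g(1) f] f by (simp add: P2_def integrable_distr_eq)
qed

lemma P2_distr_fst:
  fixes g :: "('a::euclidean_space \<times> 'b::euclidean_space) measure"
  assumes "g \<in> P2"
  shows "distr g borel fst \<in> P2"
proof (rule P2_distr_norm_le[OF assms])
  show "norm (fst z) \<le> norm z" for z :: "'a \<times> 'b"
    using norm_fst_le[of "fst z" "snd z"] by simp
qed measurable

lemma integrable_P2_products:
  fixes \<mu> :: "r2 measure"
  assumes "\<mu> \<in> P2"
  shows "integrable \<mu> (\<lambda>x. fst x * snd x)" "integrable \<mu> (\<lambda>x. (fst x)\<^sup>2)" "integrable \<mu> (\<lambda>x. (snd x)\<^sup>2)"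
proof -
  have \<mu>: "finite_measure \<mu>" "sets \<mu> = sets borel" "integrable \<mu> (\<lambda>z. norm z ^ 2)"
    using assms by (auto simp: P2_def prob_space_def)
  have "\<bar>fst x\<bar> \<le> 1 * norm x + 0" "\<bar>snd x\<bar> \<le> 1 * norm x + 0" for x :: r2
    using norm_fst_le[of "fst x" "snd x"] norm_snd_le[of "snd x" "fst x"] by auto
  then show "integrable \<mu> (\<lambda>x. fst x * snd x)" "integrable \<mu> (\<lambda>x. (fst x)\<^sup>2)" "integrable \<mu> (\<lambda>x. (snd x)\<^sup>2)"
    unfolding power2_eq_square
    by (intro integrable_mult_linear_growth[OF \<mu>(1,3), where k = 1 and c = 0];
        simp add: measurable_cong_sets[OF \<mu>(2) refl])+
qed

section \<open>The cost of a martingale plan\<close>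

lemma distr_density_pos_neg_part_eq:
  fixes \<gamma> :: "'a measure" and D :: "'a \<Rightarrow> real" and X :: "'a \<Rightarrow> 'b"
  assumes X[measurable]: "X \<in> measurable \<gamma> N" and D: "integrable \<gamma> D"
    and orth: "\<forall>A\<in>sets N. (\<integral>p. indicator A (X p) * D p \<partial>\<gamma>) = 0"
  shows "distr (density \<gamma> (\<lambda>p. max 0 (D p))) N X = distr (density \<gamma> (\<lambda>p. max 0 (- D p))) N X"
proof (rule measure_eqI)
  have [measurable]: "D \<in> borel_measurable \<gamma>"
    using D by simp
  fix A assume "A \<in> sets (distr (density \<gamma> (\<lambda>p. max 0 (D p))) N X)"
  then have A[measurable]: "A \<in> sets N"
    by simp
  have int: "integrable \<gamma> (\<lambda>p. indicator A (X p) * max 0 (\<sigma> * D p))" if "\<sigma> \<in> {1, -1}" for \<sigma> :: real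
    using that by (intro Bochner_Integration.integrable_bound[OF D]) (auto simp: indicator_def)
  have emeasure_eq: "emeasure (distr (density \<gamma> (\<lambda>p. max 0 (\<sigma> * D p))) N X) A
      = ennreal (\<integral>p. indicator A (X p) * max 0 (\<sigma> * D p) \<partial>\<gamma>)" if "\<sigma> \<in> {1, -1}" for \<sigma> :: real
  proof -
    have "emeasure (distr (density \<gamma> (\<lambda>p. max 0 (\<sigma> * D p))) N X) A
        = (\<integral>\<^sup>+p. ennreal (indicator A (X p) * max 0 (\<sigma> * D p)) \<partial>\<gamma>)"
      using that by (simp add: emeasure_distr emeasure_density)
        (intro nn_integral_cong, auto simp: indicator_def)
    also have "\<dots> = ennreal (\<integral>p. indicator A (X p) * max 0 (\<sigma> * D p) \<partial>\<gamma>)"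
      by (rule nn_integral_eq_integral[OF int[OF that]]) auto
    finally show ?thesis .
  qed
  have "(\<integral>p. indicator A (X p) * D p \<partial>\<gamma>)
      = (\<integral>p. indicator A (X p) * max 0 (1 * D p) - indicator A (X p) * max 0 (- 1 * D p) \<partial>\<gamma>)"
    by (rule Bochner_Integration.integral_cong) (auto simp: indicator_def)
  then have "(\<integral>p. indicator A (X p) * max 0 (1 * D p) \<partial>\<gamma>) = (\<integral>p. indicator A (X p) * max 0 (- 1 * D p) \<partial>\<gamma>)"
    using orth int[of 1] int[of "-1"] by simp
  then show "emeasure (distr (density \<gamma> (\<lambda>p. max 0 (D p))) N X) A
      = emeasure (distr (density \<gamma> (\<lambda>p. max 0 (- D p))) N X) A"
    using emeasure_eq[of 1] emeasure_eq[of "-1"] by simp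
qed simp

lemma integral_comp_mult_eq_0:
  fixes \<gamma> :: "'a measure" and D :: "'a \<Rightarrow> real" and X :: "'a \<Rightarrow> 'b"
  assumes X[measurable]: "X \<in> measurable \<gamma> N" and D: "integrable \<gamma> D"
    and orth: "\<forall>A\<in>sets N. (\<integral>p. indicator A (X p) * D p \<partial>\<gamma>) = 0"
    and f[measurable]: "f \<in> borel_measurable N" and fD: "integrable \<gamma> (\<lambda>p. f (X p) * D p)"
  shows "(\<integral>p. f (X p) * D p \<partial>\<gamma>) = 0"
proof -
  have [measurable]: "D \<in> borel_measurable \<gamma>"
    using D by simp
  have part: "(\<integral>x. f x \<partial>distr (density \<gamma> (\<lambda>p. max 0 (\<sigma> * D p))) N X) = (\<integral>p. max 0 (\<sigma> * D p) * f (X p) \<partial>\<gamma>)"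
    for \<sigma> :: real
  proof -
    have "(\<integral>x. f x \<partial>distr (density \<gamma> (\<lambda>p. max 0 (\<sigma> * D p))) N X)
        = (\<integral>p. f (X p) \<partial>density \<gamma> (\<lambda>p. max 0 (\<sigma> * D p)))"
      by (rule integral_distr) simp_all
    also have "\<dots> = (\<integral>p. max 0 (\<sigma> * D p) * f (X p) \<partial>\<gamma>)"
      by (subst integral_density[of "\<lambda>p. f (X p)"]) auto
    finally show ?thesis .
  qed
  have int: "integrable \<gamma> (\<lambda>p. max 0 (\<sigma> * D p) * f (X p))" if "\<sigma> \<in> {1, -1}" for \<sigma> :: real
    using that by (intro Bochner_Integration.integrable_bound[OF fD])
      (auto simp: abs_mult max_def mult.commute intro: mult_right_mono)
  have "(\<integral>p. max 0 (1 * D p) * f (X p) \<partial>\<gamma>) = (\<integral>p. max 0 (- 1 * D p) * f (X p) \<partial>\<gamma>)"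
    using part[of 1] part[of "-1"] distr_density_pos_neg_part_eq[OF X D orth] by simp
  moreover have "(\<integral>p. f (X p) * D p \<partial>\<gamma>)
      = (\<integral>p. max 0 (1 * D p) * f (X p) - max 0 (- 1 * D p) * f (X p) \<partial>\<gamma>)"
    by (rule Bochner_Integration.integral_cong) (auto simp: max_def algebra_simps)
  ultimately show ?thesis
    using int[of 1] int[of "-1"] by simp
qed

lemma cond_exp_identity_iff:
  "cond_exp_identity g \<longleftrightarrow> (\<forall>P\<in>{fst, snd}. \<forall>A\<in>sets (borel :: r2 measure).
      (\<integral>p. indicator A (fst p) * (P (snd p) - P (fst p)) \<partial>g) = 0)"
  unfolding cond_exp_identity_def by auto

lemma integral_cost_Gamma:
  assumes "g \<in> Gamma \<nu>"
  shows "(\<integral>p. cost (fst p) (snd p) \<partial>g)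
      = (\<integral>y. fst y * snd y \<partial>\<nu>) - (\<integral>x. fst x * snd x \<partial>distr g borel fst)"
proof -
  have g: "finite_measure g" "sets g = sets borel" "integrable g (\<lambda>z. norm z ^ 2)"
    "cond_exp_identity g" "distr g borel snd = \<nu>"
    using assms by (auto simp: Gamma_def P2_def prob_space_def)
  have mc: "measurable g N = measurable borel N" for N :: "'c measure"
    by (rule measurable_cong_sets[OF g(2) refl])
  have prod: "integrable g (\<lambda>p. u p * v p)"
    if "u \<in> borel_measurable borel" "v \<in> borel_measurable borel"
      and "\<And>p. \<bar>u p\<bar> \<le> 2 * norm p + 0" "\<And>p. \<bar>v p\<bar> \<le> 2 * norm p + 0" for u v
    by (rule integrable_mult_linear_growth[OF g(1,3), where k = 2 and c = 0]) (use that in \<open>auto simp: mc\<close>)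
  have component: "\<bar>Q (fst p)\<bar> \<le> 2 * norm p + 0" "\<bar>Q (snd p)\<bar> \<le> 2 * norm p + 0"
    and increment: "\<bar>Q (snd p) - Q (fst p)\<bar> \<le> 2 * norm p + 0" if "Q \<in> {fst, snd}" for Q p
  proof -
    have "\<bar>Q (fst p)\<bar> \<le> norm p" "\<bar>Q (snd p)\<bar> \<le> norm p"
      using that abs_components_le_norm[of p] by auto
    then show "\<bar>Q (fst p)\<bar> \<le> 2 * norm p + 0" "\<bar>Q (snd p)\<bar> \<le> 2 * norm p + 0"
      "\<bar>Q (snd p) - Q (fst p)\<bar> \<le> 2 * norm p + 0"
      using norm_ge_zero[of p] by linarith+
  qed
  have martingale_integrable: "integrable g (\<lambda>p. P (fst p) * (Q (snd p) - Q (fst p)))"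
    if "P \<in> {fst, snd}" and "Q \<in> {fst, snd}" for P Q :: "r2 \<Rightarrow> real"
    using that by (intro prod increment component) auto
  have martingale: "(\<integral>p. P (fst p) * (Q (snd p) - Q (fst p)) \<partial>g) = 0"
    if P: "P \<in> {fst, snd}" and Q: "Q \<in> {fst, snd}" for P Q :: "r2 \<Rightarrow> real"
  proof (rule integral_comp_mult_eq_0[where X = fst and N = borel])
    show "fst \<in> measurable g borel" "P \<in> borel_measurable borel"
      using P by (auto simp: mc)
    show "\<forall>A\<in>sets borel. (\<integral>p. indicator A (fst p) * (Q (snd p) - Q (fst p)) \<partial>g) = 0"
      using g(4) Q unfolding cond_exp_identity_iff by blast
    show "integrable g (\<lambda>p. Q (snd p) - Q (fst p))"
      by (rule integrable_linear_growth[OF g(1,3) _ increment[OF Q]]) (use Q in \<open>auto simp: mc\<close>)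
    show "integrable g (\<lambda>p. P (fst p) * (Q (snd p) - Q (fst p)))"
      using P Q by (rule martingale_integrable)
  qed
  have products: "integrable g (\<lambda>p. fst (fst p) * snd (fst p))" "integrable g (\<lambda>p. fst (snd p) * snd (snd p))"
    by (intro prod component; simp)+
  have "cost (fst p) (snd p) = fst (snd p) * snd (snd p) - fst (fst p) * snd (fst p)
      - fst (fst p) * (snd (snd p) - snd (fst p)) - snd (fst p) * (fst (snd p) - fst (fst p))" for p
    by (simp add: cost_def algebra_simps)
  then have "(\<integral>p. cost (fst p) (snd p) \<partial>g)
      = (\<integral>p. fst (snd p) * snd (snd p) \<partial>g) - (\<integral>p. fst (fst p) * snd (fst p) \<partial>g)"
    using martingale[of fst snd] martingale[of snd fst] products
      martingale_integrable[of fst snd] martingale_integrable[of snd fst] by simp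
  moreover have "(\<integral>y. fst y * snd y \<partial>\<nu>) = (\<integral>p. fst (snd p) * snd (snd p) \<partial>g)"
    unfolding g(5)[symmetric] by (rule integral_distr) (simp_all add: mc)
  moreover have "(\<integral>x. fst x * snd x \<partial>distr g borel fst) = (\<integral>p. fst (fst p) * snd (fst p) \<partial>g)"
    by (rule integral_distr) (simp_all add: mc)
  ultimately show ?thesis
    by simp
qed

section \<open>Collapsing the first coordinate onto a barycentre\<close>

definition collapse :: "'a set \<Rightarrow> 'a \<Rightarrow> 'a \<Rightarrow> 'a" where
  "collapse E m x = (if x \<in> E then m else x)"

lemma measurable_collapse [measurable]:
  assumes "E \<in> sets M" and "m \<in> space M"
  shows "collapse E m \<in> measurable M M"
  unfolding collapse_def using assms by (intro measurable_If_set) auto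

lemma measurable_collapse_fst [measurable]:
  fixes E :: "'a::second_countable_topology set"
  assumes [measurable]: "E \<in> sets borel"
  shows "(\<lambda>p :: 'a \<times> 'b::second_countable_topology. (collapse E m (fst p), snd p)) \<in> measurable borel borel"
proof -
  have "(\<lambda>p :: 'a \<times> 'b. (collapse E m (fst p), snd p)) \<in> measurable borel (borel \<Otimes>\<^sub>M borel)"
    by measurable
  then show ?thesis
    by (simp add: borel_prod)
qed

lemma integral_collapse_martingale_component:
  fixes \<gamma> :: "(r2 \<times> r2) measure" and P :: "r2 \<Rightarrow> real"
  assumes "finite_measure \<gamma>" and "sets \<gamma> = sets borel" and [measurable]: "P \<in> borel_measurable borel"
    and E[measurable]: "E \<in> sets borel" and C[measurable]: "C \<in> sets borel"
    and D: "integrable \<gamma> (\<lambda>p. P (snd p) - P (fst p))"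
    and PE: "integrable \<gamma> (\<lambda>p. indicator E (fst p) * P (fst p))"
    and orth: "\<forall>A\<in>sets borel. (\<integral>p. indicator A (fst p) * (P (snd p) - P (fst p)) \<partial>\<gamma>) = 0"
    and bary: "P m * (\<integral>p. indicator E (fst p) \<partial>\<gamma>) = (\<integral>p. indicator E (fst p) * P (fst p) \<partial>\<gamma>)"
  shows "(\<integral>p. indicator C (collapse E m (fst p)) * (P (snd p) - P (collapse E m (fst p))) \<partial>\<gamma>) = 0"
proof -
  have mc: "measurable \<gamma> N = measurable borel N" for N :: "'c measure"
    by (rule measurable_cong_sets[OF assms(2) refl])
  \<comment> \<open>Off \<open>E\<close> nothing moves; on \<open>E\<close> the defect is the martingale defect of \<open>E\<close> plus the
    barycentre defect, both zero.\<close>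
  have orth_integrable: "integrable \<gamma> (\<lambda>p. indicator A (fst p) * (P (snd p) - P (fst p)))"
    if [measurable]: "A \<in> sets borel" for A
    by (rule Bochner_Integration.integrable_bound[OF D]) (auto simp: mc indicator_def)
  have "integrable \<gamma> (\<lambda>p. indicator E (fst p) :: real)"
    using assms(1) by (intro finite_measure.integrable_const_bound[where B = 1]) (auto simp: mc)
  moreover have "(\<integral>p. indicator C (collapse E m (fst p)) * (P (snd p) - P (collapse E m (fst p))) \<partial>\<gamma>)
      = (\<integral>p. indicator (C - E) (fst p) * (P (snd p) - P (fst p))
          + indicator C m * (indicator E (fst p) * (P (snd p) - P (fst p))
            + (indicator E (fst p) * P (fst p) - P m * indicator E (fst p))) \<partial>\<gamma>)"
    by (rule Bochner_Integration.integral_cong) (auto simp: collapse_def indicator_def algebra_simps)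
  ultimately show ?thesis
    using orth_integrable[of "C - E"] orth_integrable[of E] PE orth bary by simp
qed

lemma P2_distr_collapse_fst:
  fixes \<gamma> :: "('a::euclidean_space \<times> 'b::euclidean_space) measure"
  assumes "\<gamma> \<in> P2" and [measurable]: "E \<in> sets borel"
  shows "distr \<gamma> borel (\<lambda>p. (collapse E m (fst p), snd p)) \<in> P2"
proof -
  have \<gamma>: "prob_space \<gamma>" "finite_measure \<gamma>" "sets \<gamma> = sets borel" "integrable \<gamma> (\<lambda>z. norm z ^ 2)"
    using assms(1) by (auto simp: P2_def prob_space_def)
  have mc: "measurable \<gamma> N = measurable borel N" for N :: "'c measure"
    by (rule measurable_cong_sets[OF \<gamma>(3) refl])
  have G: "(\<lambda>p. (collapse E m (fst p), snd p)) \<in> measurable \<gamma> borel"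
    by (simp add: mc)
  have "integrable \<gamma> (\<lambda>p. norm (collapse E m (fst p), snd p) ^ 2)"
  proof (rule integrable_bounded_by_norm_sq[OF \<gamma>(2,4), where C = "1 + norm m ^ 2"])
    fix p :: "'a \<times> 'b"
    have "\<bar>norm (collapse E m (fst p), snd p) ^ 2\<bar> = norm (collapse E m (fst p)) ^ 2 + norm (snd p) ^ 2"
      by (simp add: norm_Pair)
    also have "\<dots> \<le> norm (fst p) ^ 2 + norm (snd p) ^ 2 + norm m ^ 2"
      by (auto simp: collapse_def)
    also have "\<dots> = norm p ^ 2 + norm m ^ 2"
      by (simp add: norm_Pair[of "fst p" "snd p", simplified])
    also have "\<dots> \<le> (1 + norm m ^ 2) * norm p ^ 2 + (1 + norm m ^ 2)"
      by (simp add: algebra_simps add_increasing)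
    finally show "\<bar>norm (collapse E m (fst p), snd p) ^ 2\<bar> \<le> (1 + norm m ^ 2) * norm p ^ 2 + (1 + norm m ^ 2)" .
  qed (unfold mc, measurable)
  then show ?thesis
    using prob_space.prob_space_distr[OF \<gamma>(1) G] G by (simp add: P2_def integrable_distr_eq)
qed

lemma cond_exp_identity_collapse:
  fixes \<gamma> :: "(r2 \<times> r2) measure"
  assumes "\<gamma> \<in> P2" and "cond_exp_identity \<gamma>" and E[measurable]: "E \<in> sets borel"
    and bary: "\<And>P. P \<in> {fst, snd} \<Longrightarrow>
      P m * measure (distr \<gamma> borel fst) E = (\<integral>x. indicator E x * P x \<partial>distr \<gamma> borel fst)"
  shows "cond_exp_identity (distr \<gamma> borel (\<lambda>p. (collapse E m (fst p), snd p)))"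
  unfolding cond_exp_identity_iff
proof (intro ballI)
  have \<gamma>: "finite_measure \<gamma>" "sets \<gamma> = sets borel" "integrable \<gamma> (\<lambda>z. norm z ^ 2)"
    using assms(1) by (auto simp: P2_def prob_space_def)
  have mc: "measurable \<gamma> N = measurable borel N" for N :: "'c measure"
    by (rule measurable_cong_sets[OF \<gamma>(2) refl])
  fix P :: "r2 \<Rightarrow> real" and C :: "r2 set"
  assume P: "P \<in> {fst, snd}" and C[measurable]: "C \<in> sets borel"
  have [measurable]: "P \<in> borel_measurable borel"
    using P by auto
  have component: "\<bar>P (fst p)\<bar> \<le> 1 * norm p + 0" "\<bar>P (snd p)\<bar> \<le> 1 * norm p + 0" for p
    using P abs_components_le_norm[of p] by auto
  have "(\<integral>p. indicator C (fst p) * (P (snd p) - P (fst p)) \<partial>distr \<gamma> borel (\<lambda>p. (collapse E m (fst p), snd p)))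
      = (\<integral>p. indicator C (collapse E m (fst p)) * (P (snd p) - P (collapse E m (fst p))) \<partial>\<gamma>)"
    by (subst integral_distr) (simp_all add: mc)
  also have "\<dots> = 0"
  proof (rule integral_collapse_martingale_component[OF \<gamma>(1,2)])
    show "integrable \<gamma> (\<lambda>p. P (snd p) - P (fst p))"
      using component
      by (intro Bochner_Integration.integrable_diff integrable_linear_growth[OF \<gamma>(1,3), where k = 1 and c = 0])
        (simp_all add: mc)
    show "integrable \<gamma> (\<lambda>p. indicator E (fst p) * P (fst p))"
      using component by (intro integrable_linear_growth[OF \<gamma>(1,3), where k = 1 and c = 0])
        (auto simp: mc indicator_def)
    show "\<forall>A\<in>sets borel. (\<integral>p. indicator A (fst p) * (P (snd p) - P (fst p)) \<partial>\<gamma>) = 0"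
      using assms(2) P unfolding cond_exp_identity_iff by blast
    have "measure (distr \<gamma> borel fst) E = (\<integral>p. indicator E (fst p) \<partial>\<gamma>)"
      using integral_distr[of fst \<gamma> borel "indicator E :: r2 \<Rightarrow> real"] by (simp add: mc)
    then show "P m * (\<integral>p. indicator E (fst p) \<partial>\<gamma>) = (\<integral>p. indicator E (fst p) * P (fst p) \<partial>\<gamma>)"
      using bary[OF P] by (simp add: integral_distr mc)
  qed simp_all
  finally show "(\<integral>p. indicator C (fst p) * (P (snd p) - P (fst p))
      \<partial>distr \<gamma> borel (\<lambda>p. (collapse E m (fst p), snd p))) = 0" .
qed

lemma Gamma_collapse:
  fixes \<gamma> :: "(r2 \<times> r2) measure"
  assumes "\<gamma> \<in> Gamma \<nu>" and E: "E \<in> sets borel"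
    and bary: "\<And>P. P \<in> {fst, snd} \<Longrightarrow>
      P m * measure (distr \<gamma> borel fst) E = (\<integral>x. indicator E x * P x \<partial>distr \<gamma> borel fst)"
  shows "distr \<gamma> borel (\<lambda>p. (collapse E m (fst p), snd p)) \<in> Gamma \<nu>"
proof -
  have \<gamma>: "\<gamma> \<in> P2" "cond_exp_identity \<gamma>" "distr \<gamma> borel snd = \<nu>"
    using assms(1) by (auto simp: Gamma_def)
  have "(\<lambda>p. (collapse E m (fst p), snd p)) \<in> measurable \<gamma> borel"
    using \<gamma>(1) E by (simp add: P2_def measurable_cong_sets[of \<gamma> borel, OF _ refl])
  then have "distr (distr \<gamma> borel (\<lambda>p. (collapse E m (fst p), snd p))) borel snd = \<nu>"
    using \<gamma>(3) by (simp add: distr_distr comp_def)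
  then show ?thesis
    using P2_distr_collapse_fst[OF \<gamma>(1) E] cond_exp_identity_collapse[OF \<gamma>(1,2) E bary]
    by (simp add: Gamma_def)
qed

text \<open>\<open>\<mu>(E)\<^sup>2 Cov\<^sub>\<mu>(x\<^sub>1, x\<^sub>2 | E) \<ge> 0\<close>, multiplied out so that no division occurs.\<close>

definition nonneg_covariance_on_sets :: "r2 measure \<Rightarrow> bool" where
  "nonneg_covariance_on_sets \<mu> \<longleftrightarrow> (\<forall>E\<in>sets borel. 0 < measure \<mu> E \<longrightarrow>
     (\<integral>x. indicator E x * fst x \<partial>\<mu>) * (\<integral>x. indicator E x * snd x \<partial>\<mu>)
       \<le> measure \<mu> E * (\<integral>x. indicator E x * (fst x * snd x) \<partial>\<mu>))"

lemma integral_mult_distr_collapse: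
  fixes \<mu> :: "r2 measure"
  assumes "finite_measure \<mu>" and "sets \<mu> = sets borel" and [measurable]: "E \<in> sets borel"
    and "integrable \<mu> (\<lambda>x. fst x * snd x)"
  shows "(\<integral>x. fst x * snd x \<partial>distr \<mu> borel (collapse E m))
      = (\<integral>x. fst x * snd x \<partial>\<mu>) - (\<integral>x. indicator E x * (fst x * snd x) \<partial>\<mu>) + fst m * snd m * measure \<mu> E"
proof -
  have mc: "measurable \<mu> N = measurable borel N" for N :: "'c measure"
    by (rule measurable_cong_sets[OF assms(2) refl])
  have "E \<in> sets \<mu>"
    using assms(2) by simp
  then have "integrable \<mu> (\<lambda>x. indicator E x * (fst x * snd x))" "integrable \<mu> (indicator E :: r2 \<Rightarrow> real)"
    using integrable_real_mult_indicator[OF _ assms(4)] finite_measure.emeasure_finite[OF assms(1)]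
    by (auto simp: mult.commute top.not_eq_extremum)
  moreover have "(\<integral>x. fst x * snd x \<partial>distr \<mu> borel (collapse E m))
      = (\<integral>x. fst (collapse E m x) * snd (collapse E m x) \<partial>\<mu>)"
    by (rule integral_distr) (simp_all add: mc)
  moreover have "\<dots> = (\<integral>x. fst x * snd x - indicator E x * (fst x * snd x) + fst m * snd m * indicator E x \<partial>\<mu>)"
    by (rule Bochner_Integration.integral_cong) (auto simp: collapse_def indicator_def)
  ultimately show ?thesis
    using assms(4) sets_eq_imp_space_eq[OF assms(2)] by simp
qed

lemma optimal_plan_nonneg_covariance:
  assumes g: "\<gamma> \<in> Gamma \<nu>"
    and opt: "\<forall>g \<in> Gamma \<nu>. (\<integral>p. cost (fst p) (snd p) \<partial>\<gamma>) \<le> (\<integral>p. cost (fst p) (snd p) \<partial>g)"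
  shows "nonneg_covariance_on_sets (distr \<gamma> borel fst)"
  unfolding nonneg_covariance_on_sets_def
proof (intro ballI impI)
  define \<mu> where "\<mu> = distr \<gamma> borel fst"
  fix E :: "r2 set" assume E[measurable]: "E \<in> sets borel" and pos: "0 < measure (distr \<gamma> borel fst) E"
  have "\<mu> \<in> P2"
    using g unfolding Gamma_def \<mu>_def by (blast intro: P2_distr_fst)
  then have \<mu>: "finite_measure \<mu>" "sets \<mu> = sets borel" "integrable \<mu> (\<lambda>x. fst x * snd x)"
    by (auto simp: P2_def prob_space_def integrable_P2_products)
  define pE where "pE = measure \<mu> E"
  define S1 where "S1 = (\<integral>x. indicator E x * fst x \<partial>\<mu>)"
  define S2 where "S2 = (\<integral>x. indicator E x * snd x \<partial>\<mu>)"
  define S12 where "S12 = (\<integral>x. indicator E x * (fst x * snd x) \<partial>\<mu>)"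
  define m where "m = (S1 / pE, S2 / pE)"
  have pE: "0 < pE"
    using pos by (simp add: pE_def \<mu>_def)
  have "P m * measure \<mu> E = (\<integral>x. indicator E x * P x \<partial>\<mu>)" if "P \<in> {fst, snd}" for P
    using that pE by (auto simp: m_def S1_def S2_def pE_def)
  then have collapsed: "distr \<gamma> borel (\<lambda>p. (collapse E m (fst p), snd p)) \<in> Gamma \<nu>"
    by (intro Gamma_collapse[OF g E]) (simp add: \<mu>_def)
  have mc: "measurable \<gamma> N = measurable borel N" for N :: "'c measure"
    using g by (intro measurable_cong_sets) (auto simp: Gamma_def P2_def)
  have "distr (distr \<gamma> borel (\<lambda>p. (collapse E m (fst p), snd p))) borel fst = distr \<mu> borel (collapse E m)"
    by (simp add: \<mu>_def distr_distr mc comp_def)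
  then have "(\<integral>x. fst x * snd x \<partial>distr \<mu> borel (collapse E m)) \<le> (\<integral>x. fst x * snd x \<partial>\<mu>)"
    using opt collapsed integral_cost_Gamma[OF g] integral_cost_Gamma[OF collapsed] by (fastforce simp: \<mu>_def)
  then have "fst m * snd m * pE \<le> S12"
    using integral_mult_distr_collapse[OF \<mu>(1,2) E \<mu>(3), of m] by (simp add: pE_def S12_def)
  then have "S1 * S2 / pE \<le> S12"
    using pE by (simp add: m_def field_simps)
  then show "(\<integral>x. indicator E x * fst x \<partial>distr \<gamma> borel fst) * (\<integral>x. indicator E x * snd x \<partial>distr \<gamma> borel fst)
      \<le> measure (distr \<gamma> borel fst) E * (\<integral>x. indicator E x * (fst x * snd x) \<partial>distr \<gamma> borel fst)"
    using pE by (simp add: S1_def S2_def S12_def pE_def \<mu>_def field_simps)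
qed

section \<open>Nonnegative covariance on all sets forces comonotonicity\<close>

lemma integrable_indicator_mult_bounded:
  fixes M :: "'a measure" and f :: "'a \<Rightarrow> real"
  assumes "finite_measure M" and "T \<in> sets M" and "f \<in> borel_measurable M"
    and "\<And>x. x \<in> T \<Longrightarrow> \<bar>f x\<bar> \<le> C"
  shows "integrable M (\<lambda>x. indicator T x * f x)"
  using assms by (intro finite_measure.integrable_const_bound[where B = "\<bar>C\<bar>"] AE_I2)
    (auto simp: indicator_def intro: order_trans[OF _ abs_ge_self])

lemma integral_indicator_mult_bounds:
  fixes M :: "'a measure" and f :: "'a \<Rightarrow> real"
  assumes "finite_measure M" and T: "T \<in> sets M" and "f \<in> borel_measurable M"
    and bounds: "\<And>x. x \<in> T \<Longrightarrow> a \<le> f x \<and> f x \<le> b"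
  shows "a * measure M T \<le> (\<integral>x. indicator T x * f x \<partial>M)"
    and "(\<integral>x. indicator T x * f x \<partial>M) \<le> b * measure M T"
proof -
  have const: "(\<integral>x. indicator T x * c \<partial>M) = c * measure M T" for c
    using T by (simp add: Int_absorb2 sets.sets_into_space)
  have int_const: "integrable M (\<lambda>x. indicator T x * c)" for c :: real
    using assms(1,2) by (rule integrable_indicator_mult_bounded[where C = "\<bar>c\<bar>"]) auto
  have int_f: "integrable M (\<lambda>x. indicator T x * f x)"
    using assms(1-3) by (rule integrable_indicator_mult_bounded[where C = "\<bar>a\<bar> + \<bar>b\<bar>"])
      (use bounds in force)
  show "a * measure M T \<le> (\<integral>x. indicator T x * f x \<partial>M)"
    unfolding const[symmetric] using bounds
    by (intro Bochner_Integration.integral_mono[OF int_const int_f]) (auto simp: indicator_def)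
  show "(\<integral>x. indicator T x * f x \<partial>M) \<le> b * measure M T"
    unfolding const[symmetric] using bounds
    by (intro Bochner_Integration.integral_mono[OF int_f int_const]) (auto simp: indicator_def)
qed

definition square_cell :: "r2 \<Rightarrow> real \<Rightarrow> r2 set" where
  "square_cell a h = {x. fst a \<le> fst x \<and> fst x < fst a + h \<and> snd a \<le> snd x \<and> snd x < snd a + h}"

lemma square_cell_borel [measurable]: "square_cell a h \<in> sets borel"
  unfolding square_cell_def by measurable

lemma integrable_indicator_square_cell:
  fixes \<mu> :: "r2 measure"
  assumes fin: "finite_measure \<mu>" and sets: "sets \<mu> = sets borel"
    and T[measurable]: "T \<in> sets borel" and cell: "T \<subseteq> square_cell a h"
  shows "integrable \<mu> (\<lambda>x. indicator T x * fst x)" "integrable \<mu> (\<lambda>x. indicator T x * snd x)"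
    "integrable \<mu> (\<lambda>x. indicator T x * (fst x * snd x))" "integrable \<mu> (\<lambda>x. indicator T x * (1 :: real))"
proof -
  define B where "B = \<bar>fst a\<bar> + \<bar>snd a\<bar> + \<bar>h\<bar> + 1"
  have small: "\<bar>fst x\<bar> \<le> B" "\<bar>snd x\<bar> \<le> B" if "x \<in> T" for x
    using cell that unfolding B_def square_cell_def by auto
  have B: "1 \<le> B"
    unfolding B_def by simp
  then have B: "1 \<le> B" "B \<le> B * B"
    by (simp_all add: mult_le_cancel_left1)
  have int: "integrable \<mu> (\<lambda>x. indicator T x * f x)"
    if "f \<in> borel_measurable borel" and "\<And>x. x \<in> T \<Longrightarrow> \<bar>f x\<bar> \<le> B * B" for f
    using that by (intro integrable_indicator_mult_bounded[OF fin]) (auto simp: sets measurable_cong_sets[OF sets refl])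
  have "\<bar>fst x\<bar> \<le> B * B" "\<bar>snd x\<bar> \<le> B * B" "\<bar>fst x * snd x\<bar> \<le> B * B" "\<bar>1\<bar> \<le> B * B"
    if "x \<in> T" for x
  proof -
    show "\<bar>fst x\<bar> \<le> B * B" "\<bar>snd x\<bar> \<le> B * B" "\<bar>1\<bar> \<le> B * B"
      using small[OF that] B by linarith+
    show "\<bar>fst x * snd x\<bar> \<le> B * B"
      unfolding abs_mult using small[OF that] B by (intro mult_mono) auto
  qed
  then show "integrable \<mu> (\<lambda>x. indicator T x * fst x)" "integrable \<mu> (\<lambda>x. indicator T x * snd x)"
    "integrable \<mu> (\<lambda>x. indicator T x * (fst x * snd x))" "integrable \<mu> (\<lambda>x. indicator T x * (1 :: real))"
    by (intro int; simp)+
qed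

lemma covariance_on_square_cell_le:
  fixes \<mu> :: "r2 measure"
  assumes fin: "finite_measure \<mu>" and sets: "sets \<mu> = sets borel"
    and T[measurable]: "T \<in> sets borel" and cell: "T \<subseteq> square_cell a h"
  shows "measure \<mu> T * (\<integral>x. indicator T x * (fst x * snd x) \<partial>\<mu>)
      - (\<integral>x. indicator T x * fst x \<partial>\<mu>) * (\<integral>x. indicator T x * snd x \<partial>\<mu>) \<le> h\<^sup>2 * (measure \<mu> T)\<^sup>2"
proof -
  have mc: "measurable \<mu> N = measurable borel N" for N :: "'c measure"
    by (rule measurable_cong_sets[OF sets refl])
  have T\<mu>: "T \<in> sets \<mu>"
    using sets by simp
  have in_cell: "fst a \<le> fst x \<and> fst x \<le> fst a + h \<and> snd a \<le> snd x \<and> snd x \<le> snd a + h" if "x \<in> T" for x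
    using cell that by (auto simp: square_cell_def)
  note bounds = integral_indicator_mult_bounds[OF fin T\<mu>]
  define p where "p = measure \<mu> T"
  define S1 where "S1 = (\<integral>x. indicator T x * fst x \<partial>\<mu>)"
  define S2 where "S2 = (\<integral>x. indicator T x * snd x \<partial>\<mu>)"
  define S12 where "S12 = (\<integral>x. indicator T x * (fst x * snd x) \<partial>\<mu>)"
  have "(\<integral>x. indicator T x * ((fst x - fst a) * (snd x - snd a)) \<partial>\<mu>)
      = (\<integral>x. indicator T x * (fst x * snd x) - snd a * (indicator T x * fst x)
          - fst a * (indicator T x * snd x) + fst a * snd a * (indicator T x * 1) \<partial>\<mu>)"
    by (rule Bochner_Integration.integral_cong) (simp_all add: algebra_simps)
  also have "\<dots> = S12 - snd a * S1 - fst a * S2 + fst a * snd a * p"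
    unfolding S1_def S2_def S12_def p_def
    using integrable_indicator_square_cell[OF fin sets T cell]
    by (simp add: Int_absorb2 sets.sets_into_space[OF T\<mu>])
  moreover have "0 \<le> (fst x - fst a) * (snd x - snd a) \<and> (fst x - fst a) * (snd x - snd a) \<le> h\<^sup>2"
    if "x \<in> T" for x
    using in_cell[OF that] unfolding power2_eq_square by (auto intro: mult_mono)
  ultimately have U12: "S12 - snd a * S1 - fst a * S2 + fst a * snd a * p \<le> h\<^sup>2 * p"
    using bounds(2)[of "\<lambda>x. (fst x - fst a) * (snd x - snd a)" 0 "h\<^sup>2"] by (simp add: mc p_def)
  have U1: "0 \<le> S1 - fst a * p" and U2: "0 \<le> S2 - snd a * p"
    using bounds(1)[of fst "fst a" "fst a + h"] bounds(1)[of snd "snd a" "snd a + h"] in_cell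
    by (auto simp: mc p_def S1_def S2_def)
  have p: "0 \<le> p"
    by (simp add: p_def)
  have "p * S12 - S1 * S2
      = p * (S12 - snd a * S1 - fst a * S2 + fst a * snd a * p) - (S1 - fst a * p) * (S2 - snd a * p)"
    by (simp add: algebra_simps)
  also have "\<dots> \<le> p * (h\<^sup>2 * p)"
    using mult_left_mono[OF U12 p] mult_nonneg_nonneg[OF U1 U2] by linarith
  finally have "p * S12 - S1 * S2 \<le> h\<^sup>2 * p\<^sup>2"
    by (simp add: power2_eq_square mult_ac)
  then show ?thesis
    unfolding p_def S1_def S2_def S12_def .
qed

lemma in_square_cell_grid:
  assumes h: "0 < h" and K: "2 * L \<le> real K * h" and x: "\<bar>fst x\<bar> < L" "\<bar>snd x\<bar> < L"
  shows "\<exists>i<K. \<exists>j<K. x \<in> square_cell (real i * h - L, real j * h - L) h"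
proof -
  have index: "\<exists>i<K. real i * h - L \<le> u \<and> u < real i * h - L + h" if "\<bar>u\<bar> < L" for u
  proof -
    define i where "i = nat \<lfloor>(u + L) / h\<rfloor>"
    have "0 \<le> (u + L) / h" "(u + L) / h < real K"
      using that h K by (auto simp: field_simps)
    then have "real i \<le> (u + L) / h" "(u + L) / h < real i + 1" "i < K"
      unfolding i_def by linarith+
    then show ?thesis
      using h by (intro exI[of _ i]) (auto simp: field_simps)
  qed
  show ?thesis
    using index[OF x(1)] index[OF x(2)] by (auto simp: square_cell_def)
qed

lemma exists_heavy_square_cell:
  fixes \<mu> :: "r2 measure"
  assumes fin: "finite_measure \<mu>" and sets: "sets \<mu> = sets borel" and S[measurable]: "S \<in> sets borel"
    and bounded: "\<And>x. x \<in> S \<Longrightarrow> \<bar>fst x\<bar> < L \<and> \<bar>snd x\<bar> < L"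
    and h: "0 < h" "h \<le> 2 * L"
  shows "\<exists>a. measure \<mu> S * h\<^sup>2 / (16 * L\<^sup>2) \<le> measure \<mu> (S \<inter> square_cell a h)"
proof (rule ccontr)
  assume light: "\<not> ?thesis"
  have L: "0 < L"
    using h by simp
  define K where "K = nat \<lceil>2 * L / h\<rceil>"
  have "1 \<le> 2 * L / h"
    using h by simp
  then have K: "2 * L / h \<le> real K" "real K < 2 * L / h + 1" "0 < K"
    unfolding K_def by linarith+
  then have "real K * h \<le> 4 * L" "2 * L \<le> real K * h"
    using h \<open>1 \<le> 2 * L / h\<close> by (simp_all add: field_simps)
  then have Kh: "(real K * h)\<^sup>2 \<le> 16 * L\<^sup>2"
    using power_mono[of "real K * h" "4 * L" 2] h by (simp add: power_mult_distrib)
  define I where "I = {..<K} \<times> {..<K}"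
  define cell where "cell = (\<lambda>(i, j). S \<inter> square_cell (real i * h - L, real j * h - L) h)"
  have cover: "S \<subseteq> (\<Union>ij\<in>I. cell ij)"
  proof
    fix x assume "x \<in> S"
    then obtain i j where "i < K" "j < K" "x \<in> square_cell (real i * h - L, real j * h - L) h"
      using in_square_cell_grid[OF h(1) \<open>2 * L \<le> real K * h\<close>] bounded by blast
    with \<open>x \<in> S\<close> show "x \<in> (\<Union>ij\<in>I. cell ij)"
      by (auto simp: I_def cell_def intro!: bexI[of _ "(i, j)"])
  qed
  have cells: "cell ` I \<subseteq> sets \<mu>"
    by (auto simp: cell_def sets)
  have "finite I" "I \<noteq> {}" "card I = K * K"
    using K(3) by (auto simp: I_def card_cartesian_product)
  have "measure \<mu> S \<le> measure \<mu> (\<Union>ij\<in>I. cell ij)"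
    using cells \<open>finite I\<close> by (intro finite_measure.finite_measure_mono[OF fin cover]) blast
  also have "\<dots> \<le> (\<Sum>ij\<in>I. measure \<mu> (cell ij))"
    by (rule finite_measure.finite_measure_subadditive_finite[OF fin \<open>finite I\<close> cells])
  also have "\<dots> < (\<Sum>ij\<in>I. measure \<mu> S * h\<^sup>2 / (16 * L\<^sup>2))"
    using light \<open>finite I\<close> \<open>I \<noteq> {}\<close> by (intro sum_strict_mono) (auto simp: cell_def not_le)
  also have "\<dots> = measure \<mu> S * ((real K * h)\<^sup>2 / (16 * L\<^sup>2))"
    using \<open>card I = K * K\<close> by (simp add: power2_eq_square)
  also have "\<dots> \<le> measure \<mu> S"
    using Kh L by (intro mult_left_le) (auto simp: field_simps)
  finally show False
    by simp
qed

lemma exists_bounded_piece_with_margin: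
  fixes \<mu> :: "r2 measure" and P :: "r2 set" and g :: "r2 \<Rightarrow> real"
  assumes fin: "finite_measure \<mu>" and sets: "sets \<mu> = sets borel"
    and [measurable]: "P \<in> sets borel" "g \<in> borel_measurable borel"
    and pos: "0 < measure \<mu> {x\<in>P. s < g x}"
  shows "\<exists>n::nat. 0 < measure \<mu> {x\<in>P. s + 1 / Suc n \<le> g x \<and> \<bar>fst x\<bar> < n \<and> \<bar>snd x\<bar> < n}"
proof (rule ccontr)
  define Q where "Q n = {x\<in>P. s + 1 / real (Suc n) \<le> g x \<and> \<bar>fst x\<bar> < real n \<and> \<bar>snd x\<bar> < real n}"
    for n :: nat
  have "Q n \<in> sets borel" for n
    unfolding Q_def by measurable
  then have Q: "range Q \<subseteq> sets \<mu>"
    using sets by auto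
  assume "\<not> ?thesis"
  then have null: "measure \<mu> (Q n) = 0" for n
    by (simp add: Q_def not_less measure_le_0_iff)
  have "{x\<in>P. s < g x} \<subseteq> (\<Union>n. Q n)"
  proof
    fix x assume x: "x \<in> {x\<in>P. s < g x}"
    obtain n :: nat where n: "max (1 / (g x - s)) (max \<bar>fst x\<bar> \<bar>snd x\<bar>) < n"
      using reals_Archimedean2 by blast
    then have "1 / (g x - s) < Suc n"
      by simp
    then have "1 / Suc n < g x - s"
      using x by (simp add: field_simps)
    then have "x \<in> Q n"
      using x n by (auto simp: Q_def)
    then show "x \<in> (\<Union>n. Q n)"
      by blast
  qed
  then have "measure \<mu> {x\<in>P. s < g x} \<le> measure \<mu> (\<Union>n. Q n)"
    using Q by (intro finite_measure.finite_measure_mono[OF fin]) auto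
  also have "\<dots> \<le> (\<Sum>n. measure \<mu> (Q n))"
    using Q null by (intro finite_measure.finite_measure_subadditive_countably[OF fin]) auto
  finally show False
    using pos null by simp
qed

lemma separated_blocks_covariance_bound:
  fixes pA pB SA1 SA2 SA12 SB1 SB2 SB12 hA hB \<eta> s t :: real
  assumes pA: "0 < pA" and pB: "0 < pB" and \<eta>: "0 < \<eta>"
    and covA: "pA * SA12 - SA1 * SA2 \<le> hA\<^sup>2 * pA\<^sup>2"
    and covB: "pB * SB12 - SB1 * SB2 \<le> hB\<^sup>2 * pB\<^sup>2"
    and meanA: "(s + \<eta>) * pA \<le> SA1" "SA2 \<le> t * pA"
    and meanB: "SB1 \<le> s * pB" "(t + \<eta>) * pB \<le> SB2"
    and cov: "(SA1 + SB1) * (SA2 + SB2) \<le> (pA + pB) * (SA12 + SB12)"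
  shows "\<eta>\<^sup>2 * pA * pB \<le> hA\<^sup>2 * pA * (pA + pB) + hB\<^sup>2 * pB * (pA + pB)"
proof -
  define X where "X = pB * SA1 - pA * SB1"
  define Y where "Y = pB * SA2 - pA * SB2"
  define c where "c = \<eta> * pA * pB"
  have "0 \<le> c"
    unfolding c_def using pA pB \<eta> by simp
  have "pB * ((s + \<eta>) * pA) \<le> pB * SA1" "pA * SB1 \<le> pA * (s * pB)"
    using meanA meanB pA pB by (simp_all add: mult_left_mono)
  then have X: "c \<le> X"
    unfolding X_def c_def by (simp add: algebra_simps)
  have "pB * SA2 \<le> pB * (t * pA)" "pA * ((t + \<eta>) * pB) \<le> pA * SB2"
    using meanA meanB pA pB by (simp_all add: mult_left_mono)
  then have Y: "Y \<le> - c"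
    unfolding Y_def c_def by (simp add: algebra_simps)
  have "X * Y \<le> X * (- c)"
    using X Y \<open>0 \<le> c\<close> by (intro mult_left_mono) auto
  also have "\<dots> \<le> c * (- c)"
    using X \<open>0 \<le> c\<close> by (intro mult_right_mono_neg) auto
  finally have XY: "X * Y \<le> - c\<^sup>2"
    by (simp add: power2_eq_square)
  \<comment> \<open>Law of total covariance for the two blocks, with all denominators cleared.\<close>
  have total: "pA * pB * ((pA + pB) * (SA12 + SB12) - (SA1 + SB1) * (SA2 + SB2))
      = (pA * SA12 - SA1 * SA2) * (pB * (pA + pB)) + (pB * SB12 - SB1 * SB2) * (pA * (pA + pB)) + X * Y"
    unfolding X_def Y_def by (simp add: algebra_simps)
  have "(pA * SA12 - SA1 * SA2) * (pB * (pA + pB)) \<le> (hA\<^sup>2 * pA\<^sup>2) * (pB * (pA + pB))"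
    "(pB * SB12 - SB1 * SB2) * (pA * (pA + pB)) \<le> (hB\<^sup>2 * pB\<^sup>2) * (pA * (pA + pB))"
    "0 \<le> pA * pB * ((pA + pB) * (SA12 + SB12) - (SA1 + SB1) * (SA2 + SB2))"
    using covA covB cov pA pB by (simp_all add: mult_right_mono)
  then have "0 \<le> (pA * pB) * (hA\<^sup>2 * pA * (pA + pB) + hB\<^sup>2 * pB * (pA + pB) - \<eta>\<^sup>2 * pA * pB)"
    using total XY unfolding c_def by (simp add: power2_eq_square algebra_simps)
  then show ?thesis
    using mult_pos_pos[OF pA pB] by (simp add: zero_le_mult_iff)
qed

lemma mult_sum_lt_of_le_min:
  fixes x pA pB \<eta> :: real
  assumes pA: "0 < pA" and pB: "0 < pB" and \<eta>: "0 < \<eta>" and x: "x \<le> \<eta>\<^sup>2 * min pA pB / 4"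
  shows "x * (pA + pB) < \<eta>\<^sup>2 * pA * pB"
proof -
  have "x * (pA + pB) \<le> \<eta>\<^sup>2 * min pA pB / 4 * (pA + pB)"
    using x pA pB by (intro mult_right_mono) auto
  also have "\<dots> \<le> \<eta>\<^sup>2 / 4 * (2 * pA * pB)"
    using pA pB \<eta> by (auto simp: min_def field_simps intro: mult_left_mono)
  also have "\<dots> < \<eta>\<^sup>2 * pA * pB"
    using pA pB \<eta> by simp
  finally show ?thesis .
qed

lemma within_cell_terms_lt_separation:
  fixes pA pB hA hB \<eta> PA L :: real
  assumes pA: "0 < pA" "pA \<le> 1" and pB: "0 < pB" "pB \<le> 1" and \<eta>: "0 < \<eta>" and L: "0 < L"
    and PA: "0 \<le> PA" and hA: "hA\<^sup>2 = \<eta>\<^sup>2 * pB / 8"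
    and hB: "hB\<^sup>2 \<le> \<eta>\<^sup>2 / 8" "hB\<^sup>2 \<le> \<eta>^4 * PA / (1024 * L\<^sup>2)"
    and pA_lower: "PA * hA\<^sup>2 / (16 * L\<^sup>2) \<le> pA"
  shows "hA\<^sup>2 * pA * (pA + pB) + hB\<^sup>2 * pB * (pA + pB) < \<eta>\<^sup>2 * pA * pB"
proof -
  have "hA\<^sup>2 * pA \<le> \<eta>\<^sup>2 * min pA pB / 8"
  proof -
    have "\<eta>\<^sup>2 * pB \<le> \<eta>\<^sup>2 * 1"
      using pB by (intro mult_left_mono) auto
    then have "hA\<^sup>2 \<le> \<eta>\<^sup>2 / 8"
      using hA by simp
    then have "hA\<^sup>2 * pA \<le> \<eta>\<^sup>2 * pA / 8"
      using pA by (simp add: mult_right_mono)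
    moreover have "hA\<^sup>2 * pA \<le> hA\<^sup>2"
      using pA by (intro mult_left_le) auto
    then have "hA\<^sup>2 * pA \<le> \<eta>\<^sup>2 * pB / 8"
      unfolding hA .
    ultimately show ?thesis
      by (simp add: min_def)
  qed
  moreover have "hB\<^sup>2 * pB \<le> \<eta>\<^sup>2 * min pA pB / 8"
  proof -
    have "hB\<^sup>2 * pB \<le> \<eta>\<^sup>2 / 8 * pB"
      using hB pB by (intro mult_right_mono) auto
    moreover have "PA * (\<eta>\<^sup>2 * pB) \<le> 128 * L\<^sup>2 * pA"
      using pA_lower hA L by (simp add: field_simps)
    then have "hB\<^sup>2 * pB \<le> \<eta>\<^sup>2 / (1024 * L\<^sup>2) * (128 * L\<^sup>2 * pA)"
    proof -
      have "hB\<^sup>2 * pB \<le> \<eta>^4 * PA / (1024 * L\<^sup>2) * pB"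
        using hB pB by (intro mult_right_mono) auto
      also have "\<dots> = \<eta>\<^sup>2 / (1024 * L\<^sup>2) * (PA * (\<eta>\<^sup>2 * pB))"
        by (simp add: power2_eq_square power4_eq_xxxx algebra_simps)
      also have "\<dots> \<le> \<eta>\<^sup>2 / (1024 * L\<^sup>2) * (128 * L\<^sup>2 * pA)"
        using \<open>PA * (\<eta>\<^sup>2 * pB) \<le> 128 * L\<^sup>2 * pA\<close> L by (intro mult_left_mono) auto
      finally show ?thesis .
    qed
    ultimately show ?thesis
      using L by (auto simp: min_def field_simps)
  qed
  ultimately have "hA\<^sup>2 * pA + hB\<^sup>2 * pB \<le> \<eta>\<^sup>2 * min pA pB / 4"
    by linarith
  from mult_sum_lt_of_le_min[OF pA(1) pB(1) \<eta> this] show ?thesis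
    by (simp add: algebra_simps)
qed

lemma nonneg_covariance_union_cells:
  fixes \<mu> :: "r2 measure"
  assumes cov: "nonneg_covariance_on_sets \<mu>" and fin: "finite_measure \<mu>" and sets: "sets \<mu> = sets borel"
    and TA[measurable]: "TA \<in> sets borel" and TB[measurable]: "TB \<in> sets borel"
    and cellA: "TA \<subseteq> square_cell a hA" and cellB: "TB \<subseteq> square_cell b hB"
    and disjoint: "TA \<inter> TB = {}" and pos: "0 < measure \<mu> TA"
  shows "((\<integral>x. indicator TA x * fst x \<partial>\<mu>) + (\<integral>x. indicator TB x * fst x \<partial>\<mu>))
      * ((\<integral>x. indicator TA x * snd x \<partial>\<mu>) + (\<integral>x. indicator TB x * snd x \<partial>\<mu>))
      \<le> (measure \<mu> TA + measure \<mu> TB)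
        * ((\<integral>x. indicator TA x * (fst x * snd x) \<partial>\<mu>) + (\<integral>x. indicator TB x * (fst x * snd x) \<partial>\<mu>))"
proof -
  note intA = integrable_indicator_square_cell[OF fin sets TA cellA]
  note intB = integrable_indicator_square_cell[OF fin sets TB cellB]
  have split: "(\<integral>x. indicator (TA \<union> TB) x * f x \<partial>\<mu>) = (\<integral>x. indicator TA x * f x \<partial>\<mu>) + (\<integral>x. indicator TB x * f x \<partial>\<mu>)"
    if "integrable \<mu> (\<lambda>x. indicator TA x * f x)" "integrable \<mu> (\<lambda>x. indicator TB x * f x)" for f :: "r2 \<Rightarrow> real"
  proof -
    have "indicator (TA \<union> TB) x = (indicator TA x + indicator TB x :: real)" for x
      using disjoint by (auto simp: indicator_def)
    then show ?thesis
      using that by (simp add: distrib_right)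
  qed
  have "measure \<mu> (TA \<union> TB) = measure \<mu> TA + measure \<mu> TB"
    using disjoint sets by (intro finite_measure.finite_measure_Union[OF fin]) simp_all
  moreover have "0 < measure \<mu> (TA \<union> TB)"
    using calculation pos measure_nonneg[of \<mu> TB] by linarith
  ultimately show ?thesis
    using cov intA intB unfolding nonneg_covariance_on_sets_def
    by (auto simp: split dest!: bspec[of _ _ "TA \<union> TB"])
qed

lemma nonneg_covariance_separated_cells:
  fixes \<mu> :: "r2 measure"
  assumes cov: "nonneg_covariance_on_sets \<mu>" and fin: "finite_measure \<mu>" and sets: "sets \<mu> = sets borel"
    and TA[measurable]: "TA \<in> sets borel" and TB[measurable]: "TB \<in> sets borel"
    and cellA: "TA \<subseteq> square_cell a hA" and cellB: "TB \<subseteq> square_cell b hB"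
    and sepA: "\<And>x. x \<in> TA \<Longrightarrow> s + \<eta> \<le> fst x \<and> snd x \<le> t"
    and sepB: "\<And>x. x \<in> TB \<Longrightarrow> fst x \<le> s \<and> t + \<eta> \<le> snd x"
    and \<eta>: "0 < \<eta>" and pA: "0 < measure \<mu> TA" and pB: "0 < measure \<mu> TB"
  shows "\<eta>\<^sup>2 * measure \<mu> TA * measure \<mu> TB
      \<le> hA\<^sup>2 * measure \<mu> TA * (measure \<mu> TA + measure \<mu> TB)
        + hB\<^sup>2 * measure \<mu> TB * (measure \<mu> TA + measure \<mu> TB)"
proof (rule separated_blocks_covariance_bound[OF pA pB \<eta>])
  have mc: "measurable \<mu> N = measurable borel N" for N :: "'c measure"
    by (rule measurable_cong_sets[OF sets refl])
  have TA\<mu>: "TA \<in> sets \<mu>" and TB\<mu>: "TB \<in> sets \<mu>"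
    using sets by simp_all
  have "TA \<inter> TB = {}"
    using sepA sepB \<eta> by force
  then show "((\<integral>x. indicator TA x * fst x \<partial>\<mu>) + (\<integral>x. indicator TB x * fst x \<partial>\<mu>))
      * ((\<integral>x. indicator TA x * snd x \<partial>\<mu>) + (\<integral>x. indicator TB x * snd x \<partial>\<mu>))
      \<le> (measure \<mu> TA + measure \<mu> TB)
        * ((\<integral>x. indicator TA x * (fst x * snd x) \<partial>\<mu>) + (\<integral>x. indicator TB x * (fst x * snd x) \<partial>\<mu>))"
    by (rule nonneg_covariance_union_cells[OF cov fin sets TA TB cellA cellB _ pA])
  show "measure \<mu> TA * (\<integral>x. indicator TA x * (fst x * snd x) \<partial>\<mu>)
      - (\<integral>x. indicator TA x * fst x \<partial>\<mu>) * (\<integral>x. indicator TA x * snd x \<partial>\<mu>) \<le> hA\<^sup>2 * (measure \<mu> TA)\<^sup>2"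
    by (rule covariance_on_square_cell_le[OF fin sets TA cellA])
  show "measure \<mu> TB * (\<integral>x. indicator TB x * (fst x * snd x) \<partial>\<mu>)
      - (\<integral>x. indicator TB x * fst x \<partial>\<mu>) * (\<integral>x. indicator TB x * snd x \<partial>\<mu>) \<le> hB\<^sup>2 * (measure \<mu> TB)\<^sup>2"
    by (rule covariance_on_square_cell_le[OF fin sets TB cellB])
  have in_cellA: "fst a \<le> fst x \<and> fst x \<le> fst a + hA \<and> snd a \<le> snd x \<and> snd x \<le> snd a + hA" if "x \<in> TA" for x
    using cellA that by (auto simp: square_cell_def)
  have in_cellB: "fst b \<le> fst x \<and> fst x \<le> fst b + hB \<and> snd b \<le> snd x \<and> snd x \<le> snd b + hB" if "x \<in> TB" for x
    using cellB that by (auto simp: square_cell_def)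
  note boundsA = integral_indicator_mult_bounds[OF fin TA\<mu>] and boundsB = integral_indicator_mult_bounds[OF fin TB\<mu>]
  show "(s + \<eta>) * measure \<mu> TA \<le> (\<integral>x. indicator TA x * fst x \<partial>\<mu>)"
    using boundsA(1)[of fst "s + \<eta>" "fst a + hA"] sepA in_cellA by (simp add: mc)
  show "(\<integral>x. indicator TA x * snd x \<partial>\<mu>) \<le> t * measure \<mu> TA"
    using boundsA(2)[of snd "snd a" t] sepA in_cellA by (simp add: mc)
  show "(\<integral>x. indicator TB x * fst x \<partial>\<mu>) \<le> s * measure \<mu> TB"
    using boundsB(2)[of fst "fst b" s] sepB in_cellB by (simp add: mc)
  show "(t + \<eta>) * measure \<mu> TB \<le> (\<integral>x. indicator TB x * snd x \<partial>\<mu>)"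
    using boundsB(1)[of snd "t + \<eta>" "snd b + hB"] sepB in_cellB by (simp add: mc)
qed

lemma exists_positive_heavy_square_cell:
  fixes \<mu> :: "r2 measure"
  assumes "finite_measure \<mu>" and "sets \<mu> = sets borel" and "S \<in> sets borel"
    and "\<And>x. x \<in> S \<Longrightarrow> \<bar>fst x\<bar> < L \<and> \<bar>snd x\<bar> < L" and L: "1 \<le> L"
    and h: "0 < h" "h\<^sup>2 \<le> 1" and pos: "0 < measure \<mu> S"
  obtains a where "measure \<mu> S * h\<^sup>2 / (16 * L\<^sup>2) \<le> measure \<mu> (S \<inter> square_cell a h)"
    and "0 < measure \<mu> (S \<inter> square_cell a h)"
proof -
  have "\<bar>h\<bar> \<le> 1"
    using h(2) by (simp add: abs_square_le_1)
  then have "h \<le> 2 * L"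
    using L by linarith
  then obtain a where heavy: "measure \<mu> S * h\<^sup>2 / (16 * L\<^sup>2) \<le> measure \<mu> (S \<inter> square_cell a h)"
    using exists_heavy_square_cell[OF assms(1-4) h(1)] by blast
  moreover have "0 < measure \<mu> S * h\<^sup>2 / (16 * L\<^sup>2)"
    using pos h(1) L by simp
  ultimately show ?thesis
    using that by simp
qed

lemma exists_balanced_heavy_cells:
  fixes \<mu> :: "r2 measure"
  assumes prob: "prob_space \<mu>" and sets: "sets \<mu> = sets borel"
    and A: "A \<in> sets borel" and boundedA: "\<And>x. x \<in> A \<Longrightarrow> \<bar>fst x\<bar> < L \<and> \<bar>snd x\<bar> < L"
    and B: "B \<in> sets borel" and boundedB: "\<And>x. x \<in> B \<Longrightarrow> \<bar>fst x\<bar> < L \<and> \<bar>snd x\<bar> < L"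
    and L: "1 \<le> L" and \<eta>: "0 < \<eta>" "\<eta> \<le> 1" and PA: "0 < measure \<mu> A" and PB: "0 < measure \<mu> B"
  obtains a hA b hB where "0 < measure \<mu> (A \<inter> square_cell a hA)" and "0 < measure \<mu> (B \<inter> square_cell b hB)"
    and "hA\<^sup>2 * measure \<mu> (A \<inter> square_cell a hA)
          * (measure \<mu> (A \<inter> square_cell a hA) + measure \<mu> (B \<inter> square_cell b hB))
        + hB\<^sup>2 * measure \<mu> (B \<inter> square_cell b hB)
          * (measure \<mu> (A \<inter> square_cell a hA) + measure \<mu> (B \<inter> square_cell b hB))
      < \<eta>\<^sup>2 * measure \<mu> (A \<inter> square_cell a hA) * measure \<mu> (B \<inter> square_cell b hB)"
proof -
  have fin: "finite_measure \<mu>"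
    using prob by (simp add: prob_space_def)
  have le1: "measure \<mu> X \<le> 1" for X
    by (rule prob_space.prob_le_1[OF prob])
  have "\<eta>\<^sup>2 \<le> 1"
    using \<eta> by (simp add: power_le_one)
  \<comment> \<open>The cell in \<open>B\<close> gets a scale depending only on \<open>\<mu> A\<close>, the cell in \<open>A\<close> one adapted to the
    mass of the cell in \<open>B\<close>; then both within-cell terms are dominated by the separation term.\<close>
  define hB where "hB = sqrt (min (\<eta>\<^sup>2 / 8) (\<eta>^4 * measure \<mu> A / (1024 * L\<^sup>2)))"
  have "0 < min (\<eta>\<^sup>2 / 8) (\<eta>^4 * measure \<mu> A / (1024 * L\<^sup>2))"
    using \<eta> PA L by simp
  then have hB: "0 < hB" "hB\<^sup>2 \<le> \<eta>\<^sup>2 / 8" "hB\<^sup>2 \<le> \<eta>^4 * measure \<mu> A / (1024 * L\<^sup>2)"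
    by (simp_all add: hB_def)
  have "hB\<^sup>2 \<le> 1"
    using hB(2) \<open>\<eta>\<^sup>2 \<le> 1\<close> by linarith
  then obtain b where pB: "0 < measure \<mu> (B \<inter> square_cell b hB)"
    using exists_positive_heavy_square_cell[OF fin sets B boundedB L hB(1) _ PB] by blast
  define hA where "hA = sqrt (\<eta>\<^sup>2 * measure \<mu> (B \<inter> square_cell b hB) / 8)"
  have "0 < \<eta>\<^sup>2 * measure \<mu> (B \<inter> square_cell b hB) / 8"
    using \<eta> pB by simp
  then have hA: "0 < hA" "hA\<^sup>2 = \<eta>\<^sup>2 * measure \<mu> (B \<inter> square_cell b hB) / 8"
    by (simp_all add: hA_def)
  have "\<eta>\<^sup>2 * measure \<mu> (B \<inter> square_cell b hB) \<le> 1"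
    using \<open>\<eta>\<^sup>2 \<le> 1\<close> le1 pB by (intro mult_le_one) auto
  then have "hA\<^sup>2 \<le> 1"
    using hA(2) by linarith
  then obtain a where heavyA: "measure \<mu> A * hA\<^sup>2 / (16 * L\<^sup>2) \<le> measure \<mu> (A \<inter> square_cell a hA)"
    and pA: "0 < measure \<mu> (A \<inter> square_cell a hA)"
    using exists_positive_heavy_square_cell[OF fin sets A boundedA L hA(1) _ PA] by blast
  have "0 < L"
    using L by simp
  with heavyA have "hA\<^sup>2 * measure \<mu> (A \<inter> square_cell a hA)
          * (measure \<mu> (A \<inter> square_cell a hA) + measure \<mu> (B \<inter> square_cell b hB))
        + hB\<^sup>2 * measure \<mu> (B \<inter> square_cell b hB)
          * (measure \<mu> (A \<inter> square_cell a hA) + measure \<mu> (B \<inter> square_cell b hB))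
      < \<eta>\<^sup>2 * measure \<mu> (A \<inter> square_cell a hA) * measure \<mu> (B \<inter> square_cell b hB)"
    by (intro within_cell_terms_lt_separation[OF pA le1 pB le1 \<eta>(1) _ _ hA(2) hB(2,3)]) simp_all
  with pA pB that show ?thesis
    by blast
qed

lemma nonneg_covariance_no_separated_sets:
  fixes \<mu> :: "r2 measure"
  assumes cov: "nonneg_covariance_on_sets \<mu>" and prob: "prob_space \<mu>" and sets: "sets \<mu> = sets borel"
    and A[measurable]: "A \<in> sets borel" and B[measurable]: "B \<in> sets borel"
    and inA: "\<And>x. x \<in> A \<Longrightarrow> s + \<eta> \<le> fst x \<and> snd x \<le> t \<and> \<bar>fst x\<bar> < L \<and> \<bar>snd x\<bar> < L"
    and inB: "\<And>x. x \<in> B \<Longrightarrow> fst x \<le> s \<and> t + \<eta> \<le> snd x \<and> \<bar>fst x\<bar> < L \<and> \<bar>snd x\<bar> < L"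
    and \<eta>: "0 < \<eta>" "\<eta> \<le> 1" and L: "1 \<le> L"
  shows "measure \<mu> A = 0 \<or> measure \<mu> B = 0"
proof (rule ccontr)
  assume "\<not> ?thesis"
  then have "0 < measure \<mu> A" and "0 < measure \<mu> B"
    by (simp_all add: zero_less_measure_iff)
  moreover have "\<bar>fst x\<bar> < L \<and> \<bar>snd x\<bar> < L" if "x \<in> A \<or> x \<in> B" for x
    using that inA inB by blast
  ultimately obtain a hA b hB where pA: "0 < measure \<mu> (A \<inter> square_cell a hA)"
    and pB: "0 < measure \<mu> (B \<inter> square_cell b hB)"
    and small: "hA\<^sup>2 * measure \<mu> (A \<inter> square_cell a hA)
          * (measure \<mu> (A \<inter> square_cell a hA) + measure \<mu> (B \<inter> square_cell b hB))
        + hB\<^sup>2 * measure \<mu> (B \<inter> square_cell b hB)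
          * (measure \<mu> (A \<inter> square_cell a hA) + measure \<mu> (B \<inter> square_cell b hB))
      < \<eta>\<^sup>2 * measure \<mu> (A \<inter> square_cell a hA) * measure \<mu> (B \<inter> square_cell b hB)"
    using exists_balanced_heavy_cells[OF prob sets A _ B _ L \<eta>] by blast
  have "\<eta>\<^sup>2 * measure \<mu> (A \<inter> square_cell a hA) * measure \<mu> (B \<inter> square_cell b hB)
      \<le> hA\<^sup>2 * measure \<mu> (A \<inter> square_cell a hA)
          * (measure \<mu> (A \<inter> square_cell a hA) + measure \<mu> (B \<inter> square_cell b hB))
        + hB\<^sup>2 * measure \<mu> (B \<inter> square_cell b hB)
          * (measure \<mu> (A \<inter> square_cell a hA) + measure \<mu> (B \<inter> square_cell b hB))"
  proof (rule nonneg_covariance_separated_cells[OF cov _ sets _ _ _ _ _ _ \<eta>(1) pA pB])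
    show "finite_measure \<mu>"
      using prob by (simp add: prob_space_def)
    show "A \<inter> square_cell a hA \<in> sets borel" "B \<inter> square_cell b hB \<in> sets borel"
      by measurable
    show "s + \<eta> \<le> fst x \<and> snd x \<le> t" if "x \<in> A \<inter> square_cell a hA" for x
      using inA that by blast
    show "fst x \<le> s \<and> t + \<eta> \<le> snd x" if "x \<in> B \<inter> square_cell b hB" for x
      using inB that by blast
  qed auto
  with small show False
    by (meson leD)
qed

definition comonotone :: "r2 measure \<Rightarrow> bool" where
  "comonotone \<mu> \<longleftrightarrow> (\<forall>s t. measure \<mu> {x. s < fst x \<and> snd x \<le> t} = 0 \<or> measure \<mu> {x. fst x \<le> s \<and> t < snd x} = 0)"

lemma comonotone_if_nonneg_covariance:
  fixes \<mu> :: "r2 measure"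
  assumes cov: "nonneg_covariance_on_sets \<mu>" and prob: "prob_space \<mu>" and sets: "sets \<mu> = sets borel"
  shows "comonotone \<mu>"
  unfolding comonotone_def
proof (intro allI, rule ccontr)
  fix s t
  have fin: "finite_measure \<mu>"
    using prob by (simp add: prob_space_def)
  have quadrant_t: "{x :: r2. snd x \<le> t} \<in> sets borel" and quadrant_s: "{x :: r2. fst x \<le> s} \<in> sets borel"
    by simp_all
  assume "\<not> (measure \<mu> {x. s < fst x \<and> snd x \<le> t} = 0 \<or> measure \<mu> {x. fst x \<le> s \<and> t < snd x} = 0)"
  then have "0 < measure \<mu> {x\<in>{x. snd x \<le> t}. s < fst x}" "0 < measure \<mu> {x\<in>{x. fst x \<le> s}. t < snd x}"
    by (simp_all add: zero_less_measure_iff conj_commute)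
  then obtain nA nB :: nat where
    "0 < measure \<mu> {x\<in>{x. snd x \<le> t}. s + 1 / Suc nA \<le> fst x \<and> \<bar>fst x\<bar> < nA \<and> \<bar>snd x\<bar> < nA}" and
    "0 < measure \<mu> {x\<in>{x. fst x \<le> s}. t + 1 / Suc nB \<le> snd x \<and> \<bar>fst x\<bar> < nB \<and> \<bar>snd x\<bar> < nB}"
    using exists_bounded_piece_with_margin[OF fin sets quadrant_t measurable_fst_borel]
      exists_bounded_piece_with_margin[OF fin sets quadrant_s measurable_snd_borel] by blast
  moreover define A where "A = {x\<in>{x :: r2. snd x \<le> t}.
      s + 1 / real (Suc nA) \<le> fst x \<and> \<bar>fst x\<bar> < real nA \<and> \<bar>snd x\<bar> < real nA}"
  moreover define B where "B = {x\<in>{x :: r2. fst x \<le> s}.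
      t + 1 / real (Suc nB) \<le> snd x \<and> \<bar>fst x\<bar> < real nB \<and> \<bar>snd x\<bar> < real nB}"
  moreover have "measure \<mu> A = 0 \<or> measure \<mu> B = 0"
  proof (rule nonneg_covariance_no_separated_sets[OF cov prob sets])
    show "A \<in> sets borel" "B \<in> sets borel"
      unfolding A_def B_def by measurable
    define \<eta> where "\<eta> = min (1 / Suc nA) (1 / Suc nB)"
    define L where "L = real (max nA nB) + 1"
    have "\<eta> \<le> 1 / Suc nA" "\<eta> \<le> 1 / Suc nB" "real nA < L" "real nB < L"
      by (auto simp: \<eta>_def L_def)
    then show "s + \<eta> \<le> fst x \<and> snd x \<le> t \<and> \<bar>fst x\<bar> < L \<and> \<bar>snd x\<bar> < L" if "x \<in> A" for x
      using that by (auto simp: A_def)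
    show "fst x \<le> s \<and> t + \<eta> \<le> snd x \<and> \<bar>fst x\<bar> < L \<and> \<bar>snd x\<bar> < L" if "x \<in> B" for x
      using that \<open>\<eta> \<le> 1 / Suc nB\<close> \<open>real nB < L\<close> by (auto simp: B_def)
    show "0 < \<eta>" "1 \<le> L"
      by (auto simp: \<eta>_def L_def)
    have "1 / real (Suc nA) \<le> 1"
      by simp
    then show "\<eta> \<le> 1"
      using \<open>\<eta> \<le> 1 / Suc nA\<close> by linarith
  qed
  ultimately show False
    by simp
qed

section \<open>Comonotone measures maximise the correlation among couplings\<close>

lemma measure_eq_if_distr_eq:
  assumes "distr N borel f = distr M borel f" and "f \<in> measurable N borel" and "f \<in> measurable M borel"
    and "A \<in> sets borel"
  shows "measure N (f -` A \<inter> space N) = measure M (f -` A \<inter> space M)"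
  using assms by (metis measure_distr)

lemma measure_quadrants:
  fixes M :: "r2 measure"
  assumes "prob_space M" and sets: "sets M = sets borel"
  shows "measure M {x. s < fst x \<and> t < snd x} + measure M {x. s < fst x \<and> snd x \<le> t} = measure M {x. s < fst x}"
    and "measure M {x. s < fst x \<and> t < snd x} + measure M {x. fst x \<le> s \<and> t < snd x} = measure M {x. t < snd x}"
    and "measure M {x. s < fst x \<and> t < snd x} + measure M {x. s < fst x \<and> snd x \<le> t}
      + measure M {x. fst x \<le> s \<and> t < snd x} + measure M {x. fst x \<le> s \<and> snd x \<le> t} = 1"
proof -
  interpret prob_space M
    by fact
  have split: "measure M {x. P x \<and> Q x} + measure M {x. P x \<and> \<not> Q x} = measure M {x. P x}"
    if "{x. P x} \<in> sets borel" "{x. Q x} \<in> sets borel" for P Q :: "r2 \<Rightarrow> bool"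
  proof -
    have "{x. P x \<and> Q x} = {x. P x} \<inter> {x. Q x}" "{x. P x \<and> \<not> Q x} = {x. P x} - {x. Q x}"
      by auto
    with that sets show ?thesis
      by (simp add: finite_measure_Diff' Int_commute)
  qed
  have [simp]: "{x :: r2. s < fst x} \<in> sets borel" "{x :: r2. t < snd x} \<in> sets borel"
    "{x :: r2. fst x \<le> s} \<in> sets borel"
    by simp_all
  show first: "measure M {x. s < fst x \<and> t < snd x} + measure M {x. s < fst x \<and> snd x \<le> t} = measure M {x. s < fst x}"
    using split[of "\<lambda>x. s < fst x" "\<lambda>x. t < snd x"] by (simp add: not_less)
  show "measure M {x. s < fst x \<and> t < snd x} + measure M {x. fst x \<le> s \<and> t < snd x} = measure M {x. t < snd x}"
    using split[of "\<lambda>x. t < snd x" "\<lambda>x. s < fst x"] by (simp add: not_less conj_commute)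
  have "measure M {x. fst x \<le> s \<and> t < snd x} + measure M {x. fst x \<le> s \<and> snd x \<le> t} = measure M {x. fst x \<le> s}"
    using split[of "\<lambda>x. fst x \<le> s" "\<lambda>x. t < snd x"] by (simp add: not_less)
  moreover have "measure M {x. s < fst x} + measure M {x. fst x \<le> s} = 1"
    using split[of "\<lambda>x. True" "\<lambda>x. s < fst x"] sets sets_eq_imp_space_eq[OF sets] prob_space
    by (simp add: not_less)
  ultimately show "measure M {x. s < fst x \<and> t < snd x} + measure M {x. s < fst x \<and> snd x \<le> t}
      + measure M {x. fst x \<le> s \<and> t < snd x} + measure M {x. fst x \<le> s \<and> snd x \<le> t} = 1"
    using first by linarith
qed

lemma comonotone_quadrant_bounds:
  fixes \<mu> \<pi> :: "r2 measure"
  assumes "comonotone \<mu>" and \<mu>: "prob_space \<mu>" "sets \<mu> = sets borel"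
    and "\<pi> \<in> couplings (distr \<mu> borel fst) (distr \<mu> borel snd)"
  shows "measure \<pi> {x. s < fst x \<and> t < snd x} \<le> measure \<mu> {x. s < fst x \<and> t < snd x}"
    and "measure \<mu> {x. s < fst x \<and> snd x \<le> t} \<le> measure \<pi> {x. s < fst x \<and> snd x \<le> t}"
    and "measure \<mu> {x. fst x \<le> s \<and> t < snd x} \<le> measure \<pi> {x. fst x \<le> s \<and> t < snd x}"
    and "measure \<pi> {x. fst x \<le> s \<and> snd x \<le> t} \<le> measure \<mu> {x. fst x \<le> s \<and> snd x \<le> t}"
proof -
  have \<pi>: "prob_space \<pi>" "sets \<pi> = sets borel"
    and marginals: "distr \<pi> borel fst = distr \<mu> borel fst" "distr \<pi> borel snd = distr \<mu> borel snd"
    using assms(4) by (auto simp: couplings_def)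
  have "measure \<pi> (fst -` {s<..} \<inter> space \<pi>) = measure \<mu> (fst -` {s<..} \<inter> space \<mu>)"
    by (rule measure_eq_if_distr_eq[OF marginals(1)])
      (simp_all add: measurable_cong_sets[OF \<pi>(2) refl] measurable_cong_sets[OF \<mu>(2) refl])
  moreover have "measure \<pi> (snd -` {t<..} \<inter> space \<pi>) = measure \<mu> (snd -` {t<..} \<inter> space \<mu>)"
    by (rule measure_eq_if_distr_eq[OF marginals(2)])
      (simp_all add: measurable_cong_sets[OF \<pi>(2) refl] measurable_cong_sets[OF \<mu>(2) refl])
  ultimately have tails: "measure \<pi> {x. s < fst x} = measure \<mu> {x. s < fst x}"
    "measure \<pi> {x. t < snd x} = measure \<mu> {x. t < snd x}"
    using sets_eq_imp_space_eq[OF \<pi>(2)] sets_eq_imp_space_eq[OF \<mu>(2)] by (simp_all add: vimage_def)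
  note \<mu>_parts = measure_quadrants[OF \<mu>, of s t] and \<pi>_parts = measure_quadrants[OF \<pi>, of s t]
  have "0 \<le> measure \<pi> {x. s < fst x \<and> snd x \<le> t}" "0 \<le> measure \<pi> {x. fst x \<le> s \<and> t < snd x}"
    by simp_all
  moreover have "measure \<mu> {x. s < fst x \<and> snd x \<le> t} = 0 \<or> measure \<mu> {x. fst x \<le> s \<and> t < snd x} = 0"
    using assms(1) unfolding comonotone_def by blast
  ultimately have "measure \<pi> {x. s < fst x \<and> t < snd x} \<le> measure \<mu> {x. s < fst x \<and> t < snd x}
    \<and> measure \<mu> {x. s < fst x \<and> snd x \<le> t} \<le> measure \<pi> {x. s < fst x \<and> snd x \<le> t}
    \<and> measure \<mu> {x. fst x \<le> s \<and> t < snd x} \<le> measure \<pi> {x. fst x \<le> s \<and> t < snd x}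
    \<and> measure \<pi> {x. fst x \<le> s \<and> snd x \<le> t} \<le> measure \<mu> {x. fst x \<le> s \<and> snd x \<le> t}"
    using \<mu>_parts \<pi>_parts tails by (elim disjE) linarith+
  then show "measure \<pi> {x. s < fst x \<and> t < snd x} \<le> measure \<mu> {x. s < fst x \<and> t < snd x}"
    and "measure \<mu> {x. s < fst x \<and> snd x \<le> t} \<le> measure \<pi> {x. s < fst x \<and> snd x \<le> t}"
    and "measure \<mu> {x. fst x \<le> s \<and> t < snd x} \<le> measure \<pi> {x. fst x \<le> s \<and> t < snd x}"
    and "measure \<pi> {x. fst x \<le> s \<and> snd x \<le> t} \<le> measure \<mu> {x. fst x \<le> s \<and> snd x \<le> t}"
    by auto
qed

text \<open>The slices of these sets have Lebesgue measure \<open>max 0 u\<close> and \<open>max 0 (- u)\<close>; strict and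
  non-strict inequalities are placed so that the layer-cake integrals below range over the
  quadrants \<open>{s < x\<^sub>1}\<close> and \<open>{x\<^sub>1 \<le> - s}\<close> that appear in \<^const>\<open>comonotone\<close>.\<close>

definition positive_layers :: "(real \<times> real) set" where
  "positive_layers = {(s, u). 0 \<le> s \<and> s < u}"

definition negative_layers :: "(real \<times> real) set" where
  "negative_layers = {(s, u). 0 < s \<and> u \<le> - s}"

lemma positive_layers_borel [measurable]: "positive_layers \<in> sets (borel \<Otimes>\<^sub>M borel)"
  unfolding borel_prod positive_layers_def case_prod_beta' by measurable

lemma negative_layers_borel [measurable]: "negative_layers \<in> sets (borel \<Otimes>\<^sub>M borel)"
  unfolding borel_prod negative_layers_def case_prod_beta' by measurable

lemma emeasure_positive_layers: "emeasure lborel {s. (s, u) \<in> positive_layers} = ennreal (max 0 u)"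
proof (cases "0 \<le> u")
  case True
  then have "{s. (s, u) \<in> positive_layers} = {0..<u}"
    by (auto simp: positive_layers_def)
  with True show ?thesis
    by simp
next
  case False
  then have "{s. (s, u) \<in> positive_layers} = {}"
    by (auto simp: positive_layers_def)
  with False show ?thesis
    by simp
qed

lemma emeasure_negative_layers: "emeasure lborel {s. (s, u) \<in> negative_layers} = ennreal (max 0 (- u))"
proof (cases "0 \<le> - u")
  case True
  then have "{s. (s, u) \<in> negative_layers} = {0<..-u}"
    by (auto simp: negative_layers_def)
  with True show ?thesis
    by simp
next
  case False
  then have "{s. (s, u) \<in> negative_layers} = {}"
    by (auto simp: negative_layers_def)
  with False show ?thesis
    by simp
qed

lemma ennreal_mult_slices:
  fixes S1 S2 :: "(real \<times> real) set" and \<phi>1 \<phi>2 :: "real \<Rightarrow> real"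
  assumes S1[measurable]: "S1 \<in> sets (borel \<Otimes>\<^sub>M borel)" and S2[measurable]: "S2 \<in> sets (borel \<Otimes>\<^sub>M borel)"
    and \<phi>1: "emeasure lborel {s. (s, u) \<in> S1} = ennreal (\<phi>1 u)" "0 \<le> \<phi>1 u"
    and \<phi>2: "emeasure lborel {s. (s, v) \<in> S2} = ennreal (\<phi>2 v)" "0 \<le> \<phi>2 v"
  shows "ennreal (\<phi>1 u * \<phi>2 v)
      = (\<integral>\<^sup>+s. (\<integral>\<^sup>+t. indicator S1 (s, u) * indicator S2 (t, v) \<partial>lborel) \<partial>lborel)"
proof -
  have slice: "emeasure lborel {s. (s, w) \<in> S} = (\<integral>\<^sup>+s. indicator S (s, w) \<partial>lborel)"
    if [measurable]: "S \<in> sets (borel \<Otimes>\<^sub>M borel)" for S w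
  proof -
    have "{s. (s, w) \<in> S} \<in> sets lborel"
      by measurable
    then show ?thesis
      by (simp add: nn_integral_indicator[symmetric] indicator_def del: nn_integral_indicator)
  qed
  have "ennreal (\<phi>1 u * \<phi>2 v) = (\<integral>\<^sup>+s. indicator S1 (s, u) \<partial>lborel) * (\<integral>\<^sup>+t. indicator S2 (t, v) \<partial>lborel)"
    using \<phi>1 \<phi>2 slice[OF S1, of u] slice[OF S2, of v] by (simp add: ennreal_mult)
  also have "\<dots> = (\<integral>\<^sup>+s. indicator S1 (s, u) * (\<integral>\<^sup>+t. indicator S2 (t, v) \<partial>lborel) \<partial>lborel)"
    by (rule nn_integral_multc[symmetric]) measurable
  also have "\<dots> = (\<integral>\<^sup>+s. (\<integral>\<^sup>+t. indicator S1 (s, u) * indicator S2 (t, v) \<partial>lborel) \<partial>lborel)"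
    by (intro nn_integral_cong nn_integral_cmult[symmetric]) measurable
  finally show ?thesis .
qed

lemma nn_integral_mult_layer_cake:
  fixes M :: "r2 measure" and S1 S2 :: "(real \<times> real) set" and \<phi>1 \<phi>2 :: "real \<Rightarrow> real"
  assumes "sigma_finite_measure M" and sets: "sets M = sets borel"
    and S1[measurable]: "S1 \<in> sets (borel \<Otimes>\<^sub>M borel)" and S2[measurable]: "S2 \<in> sets (borel \<Otimes>\<^sub>M borel)"
    and \<phi>1: "\<And>u. emeasure lborel {s. (s, u) \<in> S1} = ennreal (\<phi>1 u)" "\<And>u. 0 \<le> \<phi>1 u"
    and \<phi>2: "\<And>u. emeasure lborel {s. (s, u) \<in> S2} = ennreal (\<phi>2 u)" "\<And>u. 0 \<le> \<phi>2 u"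
  shows "(\<integral>\<^sup>+x. ennreal (\<phi>1 (fst x) * \<phi>2 (snd x)) \<partial>M)
       = (\<integral>\<^sup>+s. (\<integral>\<^sup>+t. emeasure M {x. (s, fst x) \<in> S1 \<and> (t, snd x) \<in> S2} \<partial>lborel) \<partial>lborel)"
proof -
  interpret pair_sigma_finite M lborel
    using assms(1) sigma_finite_lborel by (simp add: pair_sigma_finite_def)
  have mc: "measurable M N = measurable borel N" for N :: "'c measure"
    by (rule measurable_cong_sets[OF sets refl])
  have [measurable]: "fst \<in> measurable M borel" "snd \<in> measurable M borel"
    by (simp_all add: mc)
  define I where "I s t x = indicator S1 (s, fst x) * (indicator S2 (t, snd x) :: ennreal)" for s t :: real and x :: r2
  have [measurable]: "(\<lambda>p. I s (snd p) (fst p)) \<in> borel_measurable (M \<Otimes>\<^sub>M lborel)"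
    "(\<lambda>p. \<integral>\<^sup>+t. I (snd p) t (fst p) \<partial>lborel) \<in> borel_measurable (M \<Otimes>\<^sub>M lborel)" for s
    unfolding I_def by measurable
  have "ennreal (\<phi>1 (fst x) * \<phi>2 (snd x)) = (\<integral>\<^sup>+s. (\<integral>\<^sup>+t. I s t x \<partial>lborel) \<partial>lborel)" for x
    unfolding I_def by (rule ennreal_mult_slices[OF S1 S2 \<phi>1(1) \<phi>1(2) \<phi>2(1) \<phi>2(2)])
  then have "(\<integral>\<^sup>+x. ennreal (\<phi>1 (fst x) * \<phi>2 (snd x)) \<partial>M) = (\<integral>\<^sup>+x. (\<integral>\<^sup>+s. (\<integral>\<^sup>+t. I s t x \<partial>lborel) \<partial>lborel) \<partial>M)"
    by simp
  also have "\<dots> = (\<integral>\<^sup>+s. (\<integral>\<^sup>+t. (\<integral>\<^sup>+x. I s t x \<partial>M) \<partial>lborel) \<partial>lborel)"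
    by (subst Fubini'[symmetric]) (simp_all, intro nn_integral_cong Fubini'[symmetric], simp)
  also have "\<dots> = (\<integral>\<^sup>+s. (\<integral>\<^sup>+t. emeasure M {x. (s, fst x) \<in> S1 \<and> (t, snd x) \<in> S2} \<partial>lborel) \<partial>lborel)"
  proof (intro nn_integral_cong)
    fix s t
    have "{x. (s, fst x) \<in> S1 \<and> (t, snd x) \<in> S2} \<in> sets M"
      unfolding sets by measurable
    moreover have "I s t x = indicator {x. (s, fst x) \<in> S1 \<and> (t, snd x) \<in> S2} x" for x
      by (simp add: I_def indicator_def)
    ultimately show "(\<integral>\<^sup>+x. I s t x \<partial>M) = emeasure M {x. (s, fst x) \<in> S1 \<and> (t, snd x) \<in> S2}"
      by simp
  qed
  finally show ?thesis .
qed

lemma layer_quadrants: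
  "{x :: r2. (s, fst x) \<in> positive_layers \<and> (t, snd x) \<in> positive_layers}
    = (if 0 \<le> s \<and> 0 \<le> t then {x. s < fst x \<and> t < snd x} else {})"
  "{x :: r2. (s, fst x) \<in> negative_layers \<and> (t, snd x) \<in> negative_layers}
    = (if 0 < s \<and> 0 < t then {x. fst x \<le> - s \<and> snd x \<le> - t} else {})"
  "{x :: r2. (s, fst x) \<in> positive_layers \<and> (t, snd x) \<in> negative_layers}
    = (if 0 \<le> s \<and> 0 < t then {x. s < fst x \<and> snd x \<le> - t} else {})"
  "{x :: r2. (s, fst x) \<in> negative_layers \<and> (t, snd x) \<in> positive_layers}
    = (if 0 < s \<and> 0 \<le> t then {x. fst x \<le> - s \<and> t < snd x} else {})"
  by (auto simp: positive_layers_def negative_layers_def)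

lemma comonotone_nn_integral_parts_le:
  fixes \<mu> \<pi> :: "r2 measure"
  assumes como: "comonotone \<mu>" and \<mu>: "prob_space \<mu>" "sets \<mu> = sets borel"
    and coupling: "\<pi> \<in> couplings (distr \<mu> borel fst) (distr \<mu> borel snd)"
  shows "(\<integral>\<^sup>+x. ennreal (max 0 (fst x) * max 0 (snd x)) \<partial>\<pi>) \<le> (\<integral>\<^sup>+x. ennreal (max 0 (fst x) * max 0 (snd x)) \<partial>\<mu>)"
    and "(\<integral>\<^sup>+x. ennreal (max 0 (- fst x) * max 0 (- snd x)) \<partial>\<pi>) \<le> (\<integral>\<^sup>+x. ennreal (max 0 (- fst x) * max 0 (- snd x)) \<partial>\<mu>)"
    and "(\<integral>\<^sup>+x. ennreal (max 0 (fst x) * max 0 (- snd x)) \<partial>\<mu>) \<le> (\<integral>\<^sup>+x. ennreal (max 0 (fst x) * max 0 (- snd x)) \<partial>\<pi>)"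
    and "(\<integral>\<^sup>+x. ennreal (max 0 (- fst x) * max 0 (snd x)) \<partial>\<mu>) \<le> (\<integral>\<^sup>+x. ennreal (max 0 (- fst x) * max 0 (snd x)) \<partial>\<pi>)"
proof -
  have \<pi>: "prob_space \<pi>" "sets \<pi> = sets borel"
    using coupling by (auto simp: couplings_def)
  have M: "sigma_finite_measure M" "sets M = sets borel" "emeasure M A = ennreal (measure M A)"
    if "M \<in> {\<mu>, \<pi>}" for M A
    using that \<mu> \<pi> by (auto intro: prob_space_imp_sigma_finite finite_measure.emeasure_eq_measure
        simp: prob_space_def)
  note layer_cake = nn_integral_mult_layer_cake[OF M(1,2)]
  note quadrant = comonotone_quadrant_bounds[OF como \<mu> coupling]
  have pp: "(\<integral>\<^sup>+x. ennreal (max 0 (fst x) * max 0 (snd x)) \<partial>M)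
      = (\<integral>\<^sup>+s. (\<integral>\<^sup>+t. emeasure M {x. (s, fst x) \<in> positive_layers \<and> (t, snd x) \<in> positive_layers} \<partial>lborel) \<partial>lborel)"
    and nn: "(\<integral>\<^sup>+x. ennreal (max 0 (- fst x) * max 0 (- snd x)) \<partial>M)
      = (\<integral>\<^sup>+s. (\<integral>\<^sup>+t. emeasure M {x. (s, fst x) \<in> negative_layers \<and> (t, snd x) \<in> negative_layers} \<partial>lborel) \<partial>lborel)"
    and pn: "(\<integral>\<^sup>+x. ennreal (max 0 (fst x) * max 0 (- snd x)) \<partial>M)
      = (\<integral>\<^sup>+s. (\<integral>\<^sup>+t. emeasure M {x. (s, fst x) \<in> positive_layers \<and> (t, snd x) \<in> negative_layers} \<partial>lborel) \<partial>lborel)"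
    and np: "(\<integral>\<^sup>+x. ennreal (max 0 (- fst x) * max 0 (snd x)) \<partial>M)
      = (\<integral>\<^sup>+s. (\<integral>\<^sup>+t. emeasure M {x. (s, fst x) \<in> negative_layers \<and> (t, snd x) \<in> positive_layers} \<partial>lborel) \<partial>lborel)"
    if "M \<in> {\<mu>, \<pi>}" for M
    by (rule layer_cake[OF that that]; simp add: emeasure_positive_layers emeasure_negative_layers)+
  show "(\<integral>\<^sup>+x. ennreal (max 0 (fst x) * max 0 (snd x)) \<partial>\<pi>) \<le> (\<integral>\<^sup>+x. ennreal (max 0 (fst x) * max 0 (snd x)) \<partial>\<mu>)"
    unfolding pp[of \<pi>, simplified] pp[of \<mu>, simplified]
    by (intro nn_integral_mono) (simp add: layer_quadrants M quadrant(1))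
  show "(\<integral>\<^sup>+x. ennreal (max 0 (- fst x) * max 0 (- snd x)) \<partial>\<pi>) \<le> (\<integral>\<^sup>+x. ennreal (max 0 (- fst x) * max 0 (- snd x)) \<partial>\<mu>)"
    unfolding nn[of \<pi>, simplified] nn[of \<mu>, simplified]
    by (intro nn_integral_mono) (simp add: layer_quadrants M quadrant(4))
  show "(\<integral>\<^sup>+x. ennreal (max 0 (fst x) * max 0 (- snd x)) \<partial>\<mu>) \<le> (\<integral>\<^sup>+x. ennreal (max 0 (fst x) * max 0 (- snd x)) \<partial>\<pi>)"
    unfolding pn[of \<pi>, simplified] pn[of \<mu>, simplified]
    by (intro nn_integral_mono) (simp add: layer_quadrants M quadrant(2))
  show "(\<integral>\<^sup>+x. ennreal (max 0 (- fst x) * max 0 (snd x)) \<partial>\<mu>) \<le> (\<integral>\<^sup>+x. ennreal (max 0 (- fst x) * max 0 (snd x)) \<partial>\<pi>)"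
    unfolding np[of \<pi>, simplified] np[of \<mu>, simplified]
    by (intro nn_integral_mono) (simp add: layer_quadrants M quadrant(3))
qed

lemma integrable_sign_part_product:
  fixes M :: "r2 measure"
  assumes int: "integrable M (\<lambda>x. fst x * snd x)" and sets: "sets M = sets borel"
    and fg: "f \<in> {\<lambda>u. u, uminus}" "g \<in> {\<lambda>u. u, uminus}"
  shows "integrable M (\<lambda>x. max 0 (f (fst x)) * max 0 (g (snd x)))"
proof -
  have [measurable]: "f \<in> borel_measurable borel" "g \<in> borel_measurable borel"
    using fg by auto
  have "\<bar>max 0 (f a) * max 0 (g b)\<bar> \<le> \<bar>a * b\<bar>" for a b
    using fg unfolding abs_mult by (auto intro: mult_mono)
  then show ?thesis
    by (intro Bochner_Integration.integrable_bound[OF int] AE_I2)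
      (auto simp: measurable_cong_sets[OF sets refl])
qed

lemma integral_mult_eq_sign_parts:
  fixes M :: "r2 measure"
  assumes "integrable M (\<lambda>x. fst x * snd x)" and "sets M = sets borel"
  shows "(\<integral>x. fst x * snd x \<partial>M)
      = (\<integral>x. max 0 (fst x) * max 0 (snd x) \<partial>M) + (\<integral>x. max 0 (- fst x) * max 0 (- snd x) \<partial>M)
        - (\<integral>x. max 0 (fst x) * max 0 (- snd x) \<partial>M) - (\<integral>x. max 0 (- fst x) * max 0 (snd x) \<partial>M)"
proof -
  have "(\<integral>x. fst x * snd x \<partial>M) = (\<integral>x. max 0 (fst x) * max 0 (snd x) + max 0 (- fst x) * max 0 (- snd x)
      - max 0 (fst x) * max 0 (- snd x) - max 0 (- fst x) * max 0 (snd x) \<partial>M)"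
    by (rule Bochner_Integration.integral_cong) (auto simp: max_def)
  moreover note integrable_sign_part_product[OF assms, of "\<lambda>u. u" "\<lambda>u. u"]
    integrable_sign_part_product[OF assms, of uminus uminus]
    integrable_sign_part_product[OF assms, of "\<lambda>u. u" uminus]
    integrable_sign_part_product[OF assms, of uminus "\<lambda>u. u"]
  ultimately show ?thesis
    by simp
qed

lemma integral_le_if_nn_integral_le:
  fixes f :: "'a \<Rightarrow> real"
  assumes "integrable M f" and "integrable N f" and nonneg: "\<And>x. 0 \<le> f x"
    and "(\<integral>\<^sup>+x. ennreal (f x) \<partial>M) \<le> (\<integral>\<^sup>+x. ennreal (f x) \<partial>N)"
  shows "(\<integral>x. f x \<partial>M) \<le> (\<integral>x. f x \<partial>N)"
  using assms nn_integral_eq_integral[OF assms(1)] nn_integral_eq_integral[OF assms(2)]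
    Bochner_Integration.integral_nonneg[of N f] by simp

lemma comonotone_maximizes_integral_mult:
  fixes \<mu> \<pi> :: "r2 measure"
  assumes como: "comonotone \<mu>" and \<mu>: "prob_space \<mu>" "sets \<mu> = sets borel"
    and coupling: "\<pi> \<in> couplings (distr \<mu> borel fst) (distr \<mu> borel snd)"
    and int\<mu>: "integrable \<mu> (\<lambda>x. fst x * snd x)" and int\<pi>: "integrable \<pi> (\<lambda>x. fst x * snd x)"
  shows "(\<integral>x. fst x * snd x \<partial>\<pi>) \<le> (\<integral>x. fst x * snd x \<partial>\<mu>)"
proof -
  have sets\<pi>: "sets \<pi> = sets borel"
    using coupling by (simp add: couplings_def)
  note parts = comonotone_nn_integral_parts_le[OF como \<mu> coupling]
  note int\<mu>_part = integrable_sign_part_product[OF int\<mu> \<mu>(2)]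
  note int\<pi>_part = integrable_sign_part_product[OF int\<pi> sets\<pi>]
  have "(\<integral>x. max 0 (fst x) * max 0 (snd x) \<partial>\<pi>) \<le> (\<integral>x. max 0 (fst x) * max 0 (snd x) \<partial>\<mu>)"
    using parts(1) int\<mu>_part[of "\<lambda>u. u" "\<lambda>u. u"] int\<pi>_part[of "\<lambda>u. u" "\<lambda>u. u"]
    by (intro integral_le_if_nn_integral_le) simp_all
  moreover have "(\<integral>x. max 0 (- fst x) * max 0 (- snd x) \<partial>\<pi>) \<le> (\<integral>x. max 0 (- fst x) * max 0 (- snd x) \<partial>\<mu>)"
    using parts(2) int\<mu>_part[of uminus uminus] int\<pi>_part[of uminus uminus]
    by (intro integral_le_if_nn_integral_le) simp_all
  moreover have "(\<integral>x. max 0 (fst x) * max 0 (- snd x) \<partial>\<mu>) \<le> (\<integral>x. max 0 (fst x) * max 0 (- snd x) \<partial>\<pi>)"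
    using parts(3) int\<mu>_part[of "\<lambda>u. u" uminus] int\<pi>_part[of "\<lambda>u. u" uminus]
    by (intro integral_le_if_nn_integral_le) simp_all
  moreover have "(\<integral>x. max 0 (- fst x) * max 0 (snd x) \<partial>\<mu>) \<le> (\<integral>x. max 0 (- fst x) * max 0 (snd x) \<partial>\<pi>)"
    using parts(4) int\<mu>_part[of uminus "\<lambda>u. u"] int\<pi>_part[of uminus "\<lambda>u. u"]
    by (intro integral_le_if_nn_integral_le) simp_all
  ultimately show ?thesis
    using integral_mult_eq_sign_parts[OF int\<mu> \<mu>(2)] integral_mult_eq_sign_parts[OF int\<pi> sets\<pi>] by linarith
qed

section \<open>The Wasserstein distance between the marginals\<close>

lemma couplings_P2:
  fixes \<mu> \<pi> :: "r2 measure"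
  assumes \<mu>: "\<mu> \<in> P2" and \<pi>: "\<pi> \<in> couplings (distr \<mu> borel fst) (distr \<mu> borel snd)"
  shows "\<pi> \<in> P2"
    and "(\<integral>x. (fst x)\<^sup>2 \<partial>\<pi>) = (\<integral>x. (fst x)\<^sup>2 \<partial>\<mu>)" and "(\<integral>x. (snd x)\<^sup>2 \<partial>\<pi>) = (\<integral>x. (snd x)\<^sup>2 \<partial>\<mu>)"
proof -
  have sets: "sets \<pi> = sets borel" "sets \<mu> = sets borel" and "prob_space \<pi>"
    and marginals: "distr \<pi> borel fst = distr \<mu> borel fst" "distr \<pi> borel snd = distr \<mu> borel snd"
    using assms by (auto simp: couplings_def P2_def)
  have [measurable]: "fst \<in> measurable \<pi> borel" "snd \<in> measurable \<pi> borel"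
    "fst \<in> measurable \<mu> borel" "snd \<in> measurable \<mu> borel"
    by (simp_all add: measurable_cong_sets[OF sets(1) refl] measurable_cong_sets[OF sets(2) refl])
  have transfer: "integrable \<pi> (\<lambda>x. f (P x)) = integrable \<mu> (\<lambda>x. f (P x))"
    "(\<integral>x. f (P x) \<partial>\<pi>) = (\<integral>x. f (P x) \<partial>\<mu>)"
    if "P \<in> {fst, snd}" and [measurable]: "f \<in> borel_measurable borel" for P and f :: "real \<Rightarrow> real"
    using that(1) marginals integrable_distr_eq[of P \<pi> borel f] integrable_distr_eq[of P \<mu> borel f]
      integral_distr[of P \<pi> borel f] integral_distr[of P \<mu> borel f]
    by auto
  show "(\<integral>x. (fst x)\<^sup>2 \<partial>\<pi>) = (\<integral>x. (fst x)\<^sup>2 \<partial>\<mu>)" "(\<integral>x. (snd x)\<^sup>2 \<partial>\<pi>) = (\<integral>x. (snd x)\<^sup>2 \<partial>\<mu>)"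
    using transfer(2)[of fst "\<lambda>u. u\<^sup>2"] transfer(2)[of snd "\<lambda>u. u\<^sup>2"] by simp_all
  have "integrable \<pi> (\<lambda>x. (fst x)\<^sup>2 + (snd x)\<^sup>2)"
    using integrable_P2_products(2,3)[OF \<mu>] transfer(1)[of fst "\<lambda>u. u\<^sup>2"] transfer(1)[of snd "\<lambda>u. u\<^sup>2"] by simp
  moreover have "norm x ^ 2 = (fst x)\<^sup>2 + (snd x)\<^sup>2" for x :: r2
    by (simp add: norm_prod_def)
  ultimately show "\<pi> \<in> P2"
    using sets \<open>prob_space \<pi>\<close> by (simp add: P2_def)
qed

lemma integral_diff_square_P2:
  fixes \<mu> :: "r2 measure"
  assumes "\<mu> \<in> P2"
  shows "(\<integral>x. (fst x - snd x)\<^sup>2 \<partial>\<mu>)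
      = (\<integral>x. (fst x)\<^sup>2 \<partial>\<mu>) + (\<integral>x. (snd x)\<^sup>2 \<partial>\<mu>) - 2 * (\<integral>x. fst x * snd x \<partial>\<mu>)"
proof -
  have "(\<integral>x. (fst x - snd x)\<^sup>2 \<partial>\<mu>) = (\<integral>x. (fst x)\<^sup>2 + (snd x)\<^sup>2 - 2 * (fst x * snd x) \<partial>\<mu>)"
    by (rule Bochner_Integration.integral_cong) (simp_all add: power2_diff)
  then show ?thesis
    using integrable_P2_products(2,3)[OF assms] integrable_P2_products(1)[OF assms] by simp
qed

lemma W2_eq_if_maximizes_integral_mult:
  fixes \<mu> :: "r2 measure"
  assumes \<mu>: "\<mu> \<in> P2"
    and max: "\<forall>\<pi> \<in> couplings (distr \<mu> borel fst) (distr \<mu> borel snd).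
      (\<integral>x. fst x * snd x \<partial>\<pi>) \<le> (\<integral>x. fst x * snd x \<partial>\<mu>)"
  shows "W2 (distr \<mu> borel fst) (distr \<mu> borel snd) = sqrt (\<integral>x. (fst x - snd x)\<^sup>2 \<partial>\<mu>)"
proof -
  have "\<mu> \<in> couplings (distr \<mu> borel fst) (distr \<mu> borel snd)"
    using \<mu> by (simp add: couplings_def P2_def)
  moreover have "(\<integral>x. (fst x - snd x)\<^sup>2 \<partial>\<mu>) \<le> (\<integral>x. (fst x - snd x)\<^sup>2 \<partial>\<pi>)"
    if "\<pi> \<in> couplings (distr \<mu> borel fst) (distr \<mu> borel snd)" for \<pi>
    using max that couplings_P2[OF \<mu> that] integral_diff_square_P2[OF \<mu>]
      integral_diff_square_P2[OF couplings_P2(1)[OF \<mu> that]] by fastforce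
  ultimately have "(INF \<pi> \<in> couplings (distr \<mu> borel fst) (distr \<mu> borel snd). \<integral>x. (fst x - snd x)\<^sup>2 \<partial>\<pi>)
      = (\<integral>x. (fst x - snd x)\<^sup>2 \<partial>\<mu>)"
    by (intro cInf_eq_minimum) auto
  then show ?thesis
    by (simp add: W2_def)
qed

theorem corollary1:
  fixes \<nu> :: "r2 measure" and \<gamma> :: "(r2 \<times> r2) measure"
  assumes "\<nu> \<in> P2"
    and "\<gamma> \<in> Gamma \<nu>"
    and "\<forall>g \<in> Gamma \<nu>. (\<integral>p. cost (fst p) (snd p) \<partial>\<gamma>) \<le> (\<integral>p. cost (fst p) (snd p) \<partial>g)"
  defines "\<mu> \<equiv> distr \<gamma> borel fst"
  defines "\<mu>1 \<equiv> distr \<mu> borel fst"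
  defines "\<mu>2 \<equiv> distr \<mu> borel snd"
  shows "\<mu> \<in> couplings \<mu>1 \<mu>2
      \<and> (\<forall>\<pi> \<in> couplings \<mu>1 \<mu>2. (\<integral>x. fst x * snd x \<partial>\<pi>) \<le> (\<integral>x. fst x * snd x \<partial>\<mu>))
      \<and> W2 \<mu>1 \<mu>2 = sqrt (\<integral>x. (fst x - snd x)^2 \<partial>\<mu>)"
proof -
  have "\<mu> \<in> P2"
    using assms(2) P2_distr_fst unfolding Gamma_def \<mu>_def by blast
  then have \<mu>: "prob_space \<mu>" "sets \<mu> = sets borel"
    by (auto simp: P2_def)
  have "comonotone \<mu>"
    using optimal_plan_nonneg_covariance[OF assms(2,3)] \<mu>
    unfolding \<mu>_def by (rule comonotone_if_nonneg_covariance)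
  then have maximal: "\<forall>\<pi> \<in> couplings \<mu>1 \<mu>2. (\<integral>x. fst x * snd x \<partial>\<pi>) \<le> (\<integral>x. fst x * snd x \<partial>\<mu>)"
    using \<open>\<mu> \<in> P2\<close> \<mu> couplings_P2(1)[OF \<open>\<mu> \<in> P2\<close>]
    by (auto simp: \<mu>1_def \<mu>2_def intro!: comonotone_maximizes_integral_mult integrable_P2_products)
  moreover have "\<mu> \<in> couplings \<mu>1 \<mu>2"
    using \<mu> by (simp add: couplings_def \<mu>1_def \<mu>2_def)
  moreover have "W2 \<mu>1 \<mu>2 = sqrt (\<integral>x. (fst x - snd x)^2 \<partial>\<mu>)"
    using W2_eq_if_maximizes_integral_mult[OF \<open>\<mu> \<in> P2\<close>] maximal by (simp add: \<mu>1_def \<mu>2_def)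
  ultimately show ?thesis
    by blast
qed

end
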